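(* Let $b_0>0$. There exists $\delta_5(b_0)>0$ such that for all $\delta\in(0,\delta_5)$ there exists $s_5(b_0,\delta)\ge1$ such that for all $s_0\ge s_5$: if $(q,b)(s)\in V_{\delta,b_0}(s)$ for all $s\in[s_0,\bar s]$ (some $\bar s>s_0$), then $$|P_n(\mathcal N(q))(s)|\le CI(s)^{-2\delta}\quad\text{for all }s\in[s_0,\bar s],\ n\in\{0,1,\dots,[M]\},$$ where $\mathcal N(q)=|1+e_{b}q|^{p-1}(1+e_{b}q)-1-pe_{b}q$ with $b=b(s)$ and $C$ is independent of $s$ and $s_0$.
   Context: Fix $p>1$ and an integer $k\ge2$. Let $I(s)=e^{\frac s2(1-\frac1k)}$, $M=\frac{2kp}{p-1}$, $[M]$ the largest integer less than $M$, $e_b(y)=(p-1+by^{2k})^{-1}$. Let $\rho_s(y)=\frac{I(s)}{\sqrt{4\pi}}e^{-I(s)^2y^2/4}$, $\langle f,g\rangle_{L^2_{\rho_s}}=\int fg\rho_s\,dy$, $H_m(y,s)=\sum_{\ell=0}^{[m/2]}\frac{m!}{\ell!(m-2\ell)!}(-I(s)^{-2})^\ell y^{m-2\ell}$; $P_m(g)=\langle g,H_m\rangle_{L^2_{\rho_s}}/\langle H_m,H_m\rangle_{L^2_{\rho_s}}$, $q_m=P_m(q)$, $q_-=q-\sum_{m=0}^{[M]}q_mH_m$, $|g|_s=\sup_y\frac{|g(y)|}{I(s)^{-M}+|y|^M}$. The shrinking set $V_{\delta,b_0}(s)$ is the set of pairs $(q,b)$ ($q$ with $(1+|y|^M)^{-1}q\in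 L^\infty$, $b\in\mathbb R$) with $|q_m|\le I(s)^{-\delta}$ for $0\le m\le[M]$, $m\ne2k$; $|q_{2k}|\le I(s)^{-2\delta}$; $|q_-|_s\le I(s)^{-\delta}$; and $\frac{b_0}2\le b\le2b_0$. *)

theory Defs
  imports "HOL-Analysis.Analysis"
begin

text \<open>Fixed parameters: p > 1 (real), k \<ge> 2 (natural number).
  Functions of y are real => real; s is the self-similar time.\<close>

definition Ifun :: "nat \<Rightarrow> real \<Rightarrow> real" where
  "Ifun k s = exp (s / 2 * (1 - 1 / real k))"

definition Mexp :: "real \<Rightarrow> nat \<Rightarrow> real" where
  "Mexp p k = 2 * real k * p / (p - 1)"

text \<open>[M]: the largest integer strictly less than M (M > 0 here).\<close>
definition Mfl :: "real \<Rightarrow> nat \<Rightarrow> nat" where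
  "Mfl p k = nat (\<lceil>Mexp p k\<rceil> - 1)"

definition eb :: "real \<Rightarrow> nat \<Rightarrow> real \<Rightarrow> real \<Rightarrow> real" where
  "eb p k b y = 1 / (p - 1 + b * y ^ (2 * k))"

definition rho :: "nat \<Rightarrow> real \<Rightarrow> real \<Rightarrow> real" where
  "rho k s y = Ifun k s / sqrt (4 * pi) * exp (- (Ifun k s)\<^sup>2 * y\<^sup>2 / 4)"

definition inner_rho :: "nat \<Rightarrow> real \<Rightarrow> (real \<Rightarrow> real) \<Rightarrow> (real \<Rightarrow> real) \<Rightarrow> real" where
  "inner_rho k s f g = (\<integral>y. f y * g y * rho k s y \<partial>lborel)"

definition Hpol :: "nat \<Rightarrow> nat \<Rightarrow> real \<Rightarrow> real \<Rightarrow> real" where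
  "Hpol k m s y = (\<Sum>l = 0..m div 2. fact m / (fact l * fact (m - 2 * l))
       * (- 1 / (Ifun k s)\<^sup>2) ^ l * y ^ (m - 2 * l))"

definition Proj :: "nat \<Rightarrow> real \<Rightarrow> nat \<Rightarrow> (real \<Rightarrow> real) \<Rightarrow> real" where
  "Proj k s m g = inner_rho k s g (Hpol k m s) / inner_rho k s (Hpol k m s) (Hpol k m s)"

definition qminus :: "real \<Rightarrow> nat \<Rightarrow> real \<Rightarrow> (real \<Rightarrow> real) \<Rightarrow> real \<Rightarrow> real" where
  "qminus p k s q y = q y - (\<Sum>m = 0..Mfl p k. Proj k s m q * Hpol k m s y)"

text \<open>The condition
  (1+|y|^M)^{-1} q \<in> L^\<infinity> is rendered as measurability plus essential boundedness;
  the norm bound |q_-|_s \<le> I^{-\<delta>} is the unfolded sup bound.\<close>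
definition inV :: "real \<Rightarrow> nat \<Rightarrow> real \<Rightarrow> real \<Rightarrow> real \<Rightarrow> (real \<Rightarrow> real) \<Rightarrow> real \<Rightarrow> bool" where
  "inV p k \<delta> b0 s q b \<longleftrightarrow>
     (\<lambda>y. q y / (1 + \<bar>y\<bar> powr Mexp p k)) \<in> borel_measurable lborel \<and>
     (\<exists>C. AE y in lborel. \<bar>q y / (1 + \<bar>y\<bar> powr Mexp p k)\<bar> \<le> C) \<and>
     (\<forall>m \<le> Mfl p k. m \<noteq> 2 * k \<longrightarrow> \<bar>Proj k s m q\<bar> \<le> Ifun k s powr (- \<delta>)) \<and>
     \<bar>Proj k s (2 * k) q\<bar> \<le> Ifun k s powr (- 2 * \<delta>) \<and>
     (\<forall>y. \<bar>qminus p k s q y\<bar> / (Ifun k s powr (- Mexp p k) + \<bar>y\<bar> powr Mexp p k)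
           \<le> Ifun k s powr (- \<delta>)) \<and>
     b0 / 2 \<le> b \<and> b \<le> 2 * b0"

definition Nq :: "real \<Rightarrow> nat \<Rightarrow> real \<Rightarrow> (real \<Rightarrow> real) \<Rightarrow> real \<Rightarrow> real" where
  "Nq p k b q y = \<bar>1 + eb p k b y * q y\<bar> powr (p - 1) * (1 + eb p k b y * q y)
                  - 1 - p * eb p k b y * q y"

end

theory Submission
  imports Defs "HOL-Probability.Distributions" "HOL-Complex_Analysis.Complex_Analysis"
begin

text \<open>The substitution \<open>y = z / I(s)\<close> turns \<open>\<rho>\<^sub>s\<close> into a fixed Gaussian weight and \<open>H\<^sub>m(\<cdot>, s)\<close>
  into \<open>I\<^sup>-\<^sup>m h\<^sub>m\<close>, with \<open>h\<^sub>m\<close> the Hermite polynomials of that weight, so that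
  \<open>P\<^sub>n(N(q)) = I\<^sup>n / (2\<^sup>n n!) \<integral> N(q)(z / I) h\<^sub>n(z) gauss(z) dz\<close>.
  Split \<open>q = \<Sum> q\<^sub>m H\<^sub>m + q\<^sub>-\<close>. In the variable \<open>z\<close> the polynomial part times \<open>e\<^sub>b\<close> extends
  holomorphically to a disc of radius \<open>\<approx> I\<close>, where it is \<open>O(I\<^sup>-\<^sup>\<delta>)\<close>; as \<open>N\<close> vanishes to second
  order, \<open>N\<close> of it is \<open>O(I\<^sup>-\<^sup>2\<^sup>\<delta>)\<close> there, and Cauchy's estimates show that it differs from its
  Taylor polynomial of degree \<open>< n\<close>, which is orthogonal to \<open>h\<^sub>n\<close>, by \<open>O(I\<^sup>-\<^sup>n\<^sup>-\<^sup>2\<^sup>\<delta> (1 + |z|)\<^sup>D)\<close>.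
  Adding \<open>q\<^sub>- = O(I\<^sup>-\<^sup>\<delta>(I\<^sup>-\<^sup>M + |y|\<^sup>M))\<close> changes \<open>N\<close> by the same order, by the local Lipschitz
  bound for \<open>N\<close> and \<open>n + \<delta> \<le> M\<close>. Hence the integral is \<open>O(I\<^sup>-\<^sup>n\<^sup>-\<^sup>2\<^sup>\<delta>)\<close>, the factor \<open>I\<^sup>n\<close>
  leaves \<open>O(I\<^sup>-\<^sup>2\<^sup>\<delta>)\<close>, and finitely many \<open>n\<close> give a uniform constant.\<close>

definition gauss :: "real \<Rightarrow> real" where
  "gauss = normal_density 0 (sqrt 2)"

lemma gauss_nonneg: "0 \<le> gauss z"
  by (simp add: gauss_def)

lemma gauss_measurable [measurable]: "gauss \<in> borel_measurable borel"
  by (simp add: gauss_def)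

lemma integrable_gauss_moment: "integrable lborel (\<lambda>z. gauss z * z ^ j)"
  using integrable_normal_moment[of "sqrt 2" 0 j] by (simp add: gauss_def)

lemma integrable_gauss_abs_moment: "integrable lborel (\<lambda>z. gauss z * \<bar>z\<bar> ^ j)"
  using integrable_normal_moment_abs[of "sqrt 2" 0 j] by (simp add: gauss_def)

definition gauss_moment :: "nat \<Rightarrow> real" where
  "gauss_moment j = (\<integral>z. gauss z * z ^ j \<partial>lborel)"

lemma gauss_moment_even: "gauss_moment (2 * m) = fact (2 * m) / fact m"
  using integral_normal_moment_even[of "sqrt 2" 0 m] by (simp add: gauss_moment_def gauss_def)

lemma gauss_moment_odd: "gauss_moment (2 * m + 1) = 0"
  using integral_normal_moment_odd[of "sqrt 2" 0 m] by (simp add: gauss_moment_def gauss_def)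

lemma gauss_moment_Suc_Suc: "gauss_moment (Suc (Suc j)) = 2 * real (Suc j) * gauss_moment j"
proof (cases "even j")
  case True
  then obtain m where j: "j = 2 * m" by (auto elim: evenE)
  have "fact (2 * Suc m) / fact (Suc m)
      = (2 * (2 * real m + 1) * fact (2 * m)) * (real m + 1) / ((fact m :: real) * (real m + 1))"
    by (simp add: fact_Suc algebra_simps)
  also have "\<dots> = 2 * (2 * real m + 1) * (fact (2 * m) / fact m)"
    by (subst mult_divide_mult_cancel_right) simp_all
  finally have "fact (2 * Suc m) / fact (Suc m) = 2 * (2 * real m + 1) * (fact (2 * m) / (fact m :: real))" .
  then show ?thesis
    using gauss_moment_even[of "Suc m"] gauss_moment_even[of m] by (simp add: j)
next
  case False
  then obtain m where "j = 2 * m + 1" by (auto elim: oddE)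
  then show ?thesis
    using gauss_moment_odd[of "Suc m"] gauss_moment_odd[of m] by simp
qed

lemma poly_eq_sum_upto:
  "degree (p :: 'a :: comm_semiring_1 poly) \<le> N \<Longrightarrow> poly p x = (\<Sum>i\<le>N. coeff p i * x ^ i)"
  unfolding poly_altdef by (rule sum.mono_neutral_left) (auto simp: coeff_eq_0)

definition gauss_poly_integral :: "real poly \<Rightarrow> real" where
  "gauss_poly_integral F = (\<integral>z. poly F z * gauss z \<partial>lborel)"

lemma poly_times_gauss_eq_sum:
  "degree F \<le> N \<Longrightarrow> poly F z * gauss z = (\<Sum>i\<le>N. coeff F i * (gauss z * z ^ i))"
  by (simp add: poly_eq_sum_upto sum_distrib_right sum_distrib_left mult_ac)

lemma integrable_poly_times_gauss: "integrable lborel (\<lambda>z. poly F z * gauss z)"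
  by (subst poly_times_gauss_eq_sum[OF order.refl])
    (auto intro!: Bochner_Integration.integrable_sum integrable_mult_right integrable_gauss_moment)

lemma gauss_poly_integral_eq_sum:
  "degree F \<le> N \<Longrightarrow> gauss_poly_integral F = (\<Sum>i\<le>N. coeff F i * gauss_moment i)"
  unfolding gauss_poly_integral_def gauss_moment_def poly_times_gauss_eq_sum
  by (simp add: integral_sum integrable_gauss_moment)

lemma gauss_poly_integral_add: "gauss_poly_integral (F + G) = gauss_poly_integral F + gauss_poly_integral G"
  unfolding gauss_poly_integral_def by (simp add: distrib_right integrable_poly_times_gauss)

lemma gauss_poly_integral_diff: "gauss_poly_integral (F - G) = gauss_poly_integral F - gauss_poly_integral G"
  unfolding gauss_poly_integral_def by (simp add: left_diff_distrib integrable_poly_times_gauss)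

lemma gauss_poly_integral_smult: "gauss_poly_integral (smult c F) = c * gauss_poly_integral F"
  unfolding gauss_poly_integral_def by (simp add: mult.assoc)

text \<open>Gaussian integration by parts, \<open>\<integral> z F(z) gauss(z) dz = 2 \<integral> F'(z) gauss(z) dz\<close>, read off from
  the moment recursion.\<close>
lemma gauss_poly_integral_pCons_0:
  "gauss_poly_integral (pCons 0 F) = 2 * gauss_poly_integral (pderiv F)"
proof -
  define d where "d = degree F"
  have "gauss_poly_integral (pCons 0 F) = (\<Sum>i\<le>Suc d. coeff (pCons 0 F) i * gauss_moment i)"
    by (rule gauss_poly_integral_eq_sum) (simp add: d_def degree_pCons_le)
  also have "\<dots> = (\<Sum>i\<le>Suc d. coeff F i * gauss_moment (Suc i))"
    by (subst sum.atMost_Suc_shift) (simp add: d_def coeff_eq_0)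
  also have "\<dots> = (\<Sum>i\<le>d. coeff F (Suc i) * gauss_moment (Suc (Suc i)))"
    using gauss_moment_odd[of 0] by (subst sum.atMost_Suc_shift) simp
  also have "\<dots> = 2 * (\<Sum>i\<le>d. coeff (pderiv F) i * gauss_moment i)"
    by (simp add: sum_distrib_left coeff_pderiv gauss_moment_Suc_Suc algebra_simps)
  also have "(\<Sum>i\<le>d. coeff (pderiv F) i * gauss_moment i) = gauss_poly_integral (pderiv F)"
    by (rule gauss_poly_integral_eq_sum[symmetric]) (simp add: d_def degree_pderiv)
  finally show ?thesis .
qed

text \<open>The Hermite polynomials orthogonal for \<open>gauss\<close>, i.e. the paper's \<open>H\<^sub>n(\<cdot>, s)\<close> at \<open>I(s) = 1\<close>.\<close>
fun hermite_poly :: "nat \<Rightarrow> real poly" where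
  "hermite_poly 0 = 1"
| "hermite_poly (Suc n) = pCons 0 (hermite_poly n) - smult 2 (pderiv (hermite_poly n))"

definition hermite_moment :: "nat \<Rightarrow> nat \<Rightarrow> real" where
  "hermite_moment j n = gauss_poly_integral (monom 1 j * hermite_poly n)"

lemma hermite_moment_Suc: "hermite_moment j (Suc n) = 2 * real j * hermite_moment (j - 1) n"
proof -
  have "monom 1 j * hermite_poly (Suc n)
      = pCons 0 (monom 1 j * hermite_poly n) - smult 2 (monom 1 j * pderiv (hermite_poly n))"
    by (simp add: algebra_simps)
  moreover have "pderiv (monom 1 j * hermite_poly n)
      = monom 1 j * pderiv (hermite_poly n) + smult (real j) (monom 1 (j - 1) * hermite_poly n)"
    using smult_monom[of "real j" 1 "j - 1", symmetric] by (simp add: pderiv_mult pderiv_monom algebra_simps)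
  ultimately show ?thesis
    unfolding hermite_moment_def
    by (simp add: gauss_poly_integral_diff gauss_poly_integral_add gauss_poly_integral_smult
        gauss_poly_integral_pCons_0 algebra_simps)
qed

lemma hermite_moment_below: "j < n \<Longrightarrow> hermite_moment j n = 0"
proof (induction n arbitrary: j)
  case (Suc n)
  then show ?case by (cases j) (simp_all add: hermite_moment_Suc)
qed simp

lemma hermite_moment_diag: "hermite_moment n n = 2 ^ n * fact n"
proof (induction n)
  case 0
  show ?case by (simp add: hermite_moment_def gauss_poly_integral_def gauss_def)
qed (simp add: hermite_moment_Suc)

definition hermite_coeff :: "nat \<Rightarrow> nat \<Rightarrow> real" where
  "hermite_coeff n i = (if i \<le> n \<and> even (n - i)
     then (-1) ^ ((n - i) div 2) * fact n / (fact ((n - i) div 2) * fact i) else 0)"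

lemma hermite_coeff_eq: "hermite_coeff (i + 2 * l) i = (-1) ^ l * fact (i + 2 * l) / (fact l * fact i)"
  by (simp add: hermite_coeff_def)

lemma hermite_coeff_eq_0: "\<not> (\<exists>l. n = i + 2 * l) \<Longrightarrow> hermite_coeff n i = 0"
  unfolding hermite_coeff_def by (metis evenE le_add_diff_inverse)

lemma hermite_coeff_Suc_same_parity:
  fixes i l :: nat
  defines "n \<equiv> Suc (i + 2 * l)"
  shows "hermite_coeff (Suc n) i
    = (case i of 0 \<Rightarrow> 0 | Suc j \<Rightarrow> hermite_coeff n j) - 2 * real (Suc i) * hermite_coeff n (Suc i)"
proof -
  define c where "c = (-1) ^ Suc l * fact n / (fact (Suc l) * fact i :: real)"
  have lhs: "hermite_coeff (Suc n) i = (real n + 1) * c"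
    using hermite_coeff_eq[of i "Suc l"] by (simp add: n_def c_def fact_Suc del: of_nat_Suc)
  have first: "(case i of 0 \<Rightarrow> 0 | Suc j \<Rightarrow> hermite_coeff n j) = real i * c"
  proof (cases i)
    case (Suc j)
    have "hermite_coeff n j = (-1) ^ Suc l * fact n / (fact (Suc l) * fact j)"
      using hermite_coeff_eq[of j "Suc l"] by (simp add: n_def Suc)
    then show ?thesis by (simp add: Suc c_def fact_Suc divide_simps del: of_nat_Suc)
  qed (simp add: c_def)
  have "hermite_coeff n (Suc i) = (-1) ^ l * fact n / (fact l * fact (Suc i))"
    using hermite_coeff_eq[of "Suc i" l] by (simp add: n_def)
  then have second: "2 * real (Suc i) * hermite_coeff n (Suc i) = - (2 * real l + 2) * c"
    unfolding c_def by (simp only:) (simp add: fact_Suc divide_simps del: of_nat_Suc, simp add: algebra_simps)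
  have "real n + 1 = real i + (2 * real l + 2)" by (simp add: n_def)
  then show ?thesis unfolding lhs first second by (simp add: algebra_simps)
qed

lemma hermite_coeff_Suc:
  "hermite_coeff (Suc n) i
    = (case i of 0 \<Rightarrow> 0 | Suc j \<Rightarrow> hermite_coeff n j) - 2 * real (Suc i) * hermite_coeff n (Suc i)"
proof (cases "\<exists>l. Suc n = i + 2 * l")
  case True
  then obtain l where l: "Suc n = i + 2 * l" by blast
  show ?thesis
  proof (cases l)
    case 0
    then have "i = Suc n" using l by simp
    then show ?thesis by (simp add: hermite_coeff_def)
  next
    case (Suc l')
    then have "n = Suc (i + 2 * l')" using l by simp
    then show ?thesis using hermite_coeff_Suc_same_parity[of i l'] by (simp only:)
  qed
next
  case False
  have "hermite_coeff n (Suc i) = 0"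
  proof (rule hermite_coeff_eq_0, clarify)
    fix l assume "n = Suc i + 2 * l"
    then have "Suc n = i + 2 * Suc l" by simp
    then show False using False by blast
  qed
  moreover have "hermite_coeff n j = 0" if "i = Suc j" for j
  proof (rule hermite_coeff_eq_0, clarify)
    fix l assume "n = j + 2 * l"
    then have "Suc n = i + 2 * l" using that by simp
    then show False using False by blast
  qed
  ultimately show ?thesis using hermite_coeff_eq_0[OF False] by (cases i) simp_all
qed

lemma coeff_hermite_poly: "coeff (hermite_poly n) i = hermite_coeff n i"
proof (induction n arbitrary: i)
  case 0
  then show ?case by (cases i) (auto simp: hermite_coeff_def)
next
  case (Suc n)
  then show ?case
    by (simp add: hermite_coeff_Suc coeff_pCons coeff_pderiv split: nat.split)
qed

lemma degree_hermite_poly: "degree (hermite_poly n) \<le> n"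
  by (rule degree_le) (simp add: coeff_hermite_poly hermite_coeff_def)

definition hermite :: "nat \<Rightarrow> real \<Rightarrow> real" where
  "hermite n z = (\<Sum>i\<le>n. hermite_coeff n i * z ^ i)"

lemma poly_hermite_poly: "poly (hermite_poly n) z = hermite n z"
  unfolding hermite_def by (simp add: poly_eq_sum_upto[OF degree_hermite_poly] coeff_hermite_poly)

lemma Ifun_pos: "0 < Ifun k s"
  by (simp add: Ifun_def)

lemma Ifun_0: "Ifun k 0 = 1"
  by (simp add: Ifun_def)

lemma hermite_eq_Hpol_0: "hermite n z = Hpol k n 0 z"
proof -
  define g where "g i = hermite_coeff n i * z ^ i" for i
  have "hermite n z = sum g ((\<lambda>l. n - 2 * l) ` {0..n div 2})"
    unfolding hermite_def g_def[symmetric]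
  proof (rule sum.mono_neutral_right)
    show "\<forall>i\<in>{..n} - (\<lambda>l. n - 2 * l) ` {0..n div 2}. g i = 0"
    proof
      fix i assume i: "i \<in> {..n} - (\<lambda>l. n - 2 * l) ` {0..n div 2}"
      have "\<not> (\<exists>l. n = i + 2 * l)"
      proof
        assume "\<exists>l. n = i + 2 * l"
        then obtain l where "n = i + 2 * l" by blast
        then have "i = n - 2 * l" "l \<in> {0..n div 2}" by auto
        then show False using i by auto
      qed
      then show "g i = 0" by (simp add: g_def hermite_coeff_eq_0)
    qed
  qed auto
  also have "\<dots> = sum (g \<circ> (\<lambda>l. n - 2 * l)) {0..n div 2}"
    by (rule sum.reindex) (auto simp: inj_on_def)
  also have "\<dots> = Hpol k n 0 z"
    unfolding Hpol_def Ifun_0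
  proof (rule sum.cong)
    fix l assume "l \<in> {0..n div 2}"
    then have "n - (n - 2 * l) = 2 * l" "n - 2 * l \<le> n" by auto
    then show "(g \<circ> (\<lambda>l. n - 2 * l)) l
        = fact n / (fact l * fact (n - 2 * l)) * (- 1 / 1\<^sup>2) ^ l * z ^ (n - 2 * l)"
      by (simp add: g_def hermite_coeff_def)
  qed simp
  finally show ?thesis .
qed

lemma integral_monomials_hermite:
  assumes "finite A"
  shows "(\<integral>z. (\<Sum>i\<in>A. c i * z ^ i) * hermite n z * gauss z \<partial>lborel) = (\<Sum>i\<in>A. c i * hermite_moment i n)"
proof -
  have "(\<lambda>z. (\<Sum>i\<in>A. c i * z ^ i) * hermite n z * gauss z)
      = (\<lambda>z. \<Sum>i\<in>A. c i * (poly (monom 1 i * hermite_poly n) z * gauss z))"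
    by (simp add: sum_distrib_right sum_distrib_left poly_hermite_poly poly_monom mult_ac)
  then have "(\<integral>z. (\<Sum>i\<in>A. c i * z ^ i) * hermite n z * gauss z \<partial>lborel)
      = (\<Sum>i\<in>A. \<integral>z. c i * (poly (monom 1 i * hermite_poly n) z * gauss z) \<partial>lborel)"
    by (simp only:) (intro Bochner_Integration.integral_sum integrable_mult_right integrable_poly_times_gauss)
  then show ?thesis
    by (simp only: integral_mult_right_zero hermite_moment_def gauss_poly_integral_def)
qed

lemma hermite_orthogonal:
  "m \<le> n \<Longrightarrow> (\<integral>z. (\<Sum>j<m. d j * z ^ j) * hermite n z * gauss z \<partial>lborel) = 0"
  by (simp add: integral_monomials_hermite hermite_moment_below)

lemma hermite_norm: "(\<integral>z. hermite n z * hermite n z * gauss z \<partial>lborel) = 2 ^ n * fact n"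
proof -
  have "(\<lambda>z. hermite n z * hermite n z * gauss z)
      = (\<lambda>z. (\<Sum>i\<le>n. hermite_coeff n i * z ^ i) * hermite n z * gauss z)"
    by (simp only: hermite_def)
  then have "(\<integral>z. hermite n z * hermite n z * gauss z \<partial>lborel)
      = (\<Sum>i\<le>n. hermite_coeff n i * hermite_moment i n)"
    by (simp add: integral_monomials_hermite)
  also have "\<dots> = hermite_coeff n n * hermite_moment n n"
    by (simp add: hermite_moment_below flip: lessThan_Suc_atMost)
  finally show ?thesis by (simp add: hermite_moment_diag hermite_coeff_def)
qed

definition hermite_abs_coeffs :: "nat \<Rightarrow> real" where
  "hermite_abs_coeffs n = (\<Sum>i\<le>n. \<bar>hermite_coeff n i\<bar>)"

lemma hermite_abs_coeffs_nonneg: "0 \<le> hermite_abs_coeffs n"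
  by (simp add: hermite_abs_coeffs_def sum_nonneg)

definition hermite_complex :: "nat \<Rightarrow> complex \<Rightarrow> complex" where
  "hermite_complex n w = (\<Sum>i\<le>n. of_real (hermite_coeff n i) * w ^ i)"

lemma hermite_complex_of_real: "hermite_complex n (of_real z) = of_real (hermite n z)"
  by (simp add: hermite_complex_def hermite_def)

lemma holomorphic_hermite_complex [holomorphic_intros]: "hermite_complex n holomorphic_on S"
  unfolding hermite_complex_def by (intro holomorphic_intros)

lemma norm_hermite_complex_le: "norm (hermite_complex n w) \<le> hermite_abs_coeffs n * (1 + norm w) ^ n"
proof -
  have "norm (hermite_complex n w) \<le> (\<Sum>i\<le>n. norm (of_real (hermite_coeff n i) * w ^ i))"
    unfolding hermite_complex_def by (rule norm_sum)
  also have "\<dots> \<le> (\<Sum>i\<le>n. \<bar>hermite_coeff n i\<bar> * (1 + norm w) ^ n)"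
  proof (rule sum_mono)
    fix i assume "i \<in> {..n}"
    then have "norm w ^ i \<le> (1 + norm w) ^ n"
      by (intro order.trans[OF power_mono power_increasing]) auto
    then show "norm (of_real (hermite_coeff n i) * w ^ i) \<le> \<bar>hermite_coeff n i\<bar> * (1 + norm w) ^ n"
      by (simp add: norm_mult norm_power mult_left_mono)
  qed
  finally show ?thesis by (simp add: hermite_abs_coeffs_def sum_distrib_right)
qed

lemma abs_hermite_le: "\<bar>hermite n z\<bar> \<le> hermite_abs_coeffs n * (1 + \<bar>z\<bar>) ^ n"
  using norm_hermite_complex_le[of n "of_real z"] by (simp add: hermite_complex_of_real)

lemma hermite_measurable [measurable]: "hermite n \<in> borel_measurable borel"
  unfolding hermite_def[abs_def] by measurable

lemma rho_eq_scaled_gauss: "rho k s y = Ifun k s * gauss (Ifun k s * y)"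
  by (simp add: rho_def gauss_def normal_density_def power_mult_distrib real_sqrt_mult)

lemma integral_rho_eq_gauss:
  "(\<integral>y. F y * rho k s y \<partial>lborel) = (\<integral>z. F (z / Ifun k s) * gauss z \<partial>lborel)"
proof -
  define I where "I = Ifun k s"
  have I: "I > 0" by (simp add: I_def Ifun_pos)
  have "(\<integral>y. F y * rho k s y \<partial>lborel) = \<bar>1 / I\<bar> *\<^sub>R (\<integral>z. F (0 + 1 / I * z) * rho k s (0 + 1 / I * z) \<partial>lborel)"
    using I by (intro lborel_integral_real_affine) simp
  also have "(\<lambda>z. F (0 + 1 / I * z) * rho k s (0 + 1 / I * z)) = (\<lambda>z. I * (F (z / I) * gauss z))"
    using I by (simp add: rho_eq_scaled_gauss I_def[symmetric] mult_ac)
  finally show ?thesis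
    using I by (simp add: I_def)
qed

lemma Hpol_scaled: "Hpol k m s (z / Ifun k s) = (1 / Ifun k s) ^ m * hermite m z"
proof -
  define I where "I = Ifun k s"
  have "(1 / I) ^ m * hermite m z = Hpol k m s (z / I)"
    unfolding hermite_eq_Hpol_0[of m z k] Hpol_def sum_distrib_left I_def[symmetric] Ifun_0
  proof (rule sum.cong[OF refl])
    fix l assume "l \<in> {0..m div 2}"
    then have m: "m = (m - 2 * l) + 2 * l" by auto
    have "(I ^ l)\<^sup>2 = (I\<^sup>2) ^ l" by (simp add: power_mult[symmetric] mult.commute)
    then have "(1 / I) ^ m * z ^ (m - 2 * l) = (z / I) ^ (m - 2 * l) * (1 / I\<^sup>2) ^ l"
      by (subst m) (simp add: power_add power_divide power_mult field_simps)
    then show "(1 / I) ^ m * (fact m / (fact l * fact (m - 2 * l)) * (- 1 / 1\<^sup>2) ^ l * z ^ (m - 2 * l))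
        = fact m / (fact l * fact (m - 2 * l)) * (- 1 / I\<^sup>2) ^ l * (z / I) ^ (m - 2 * l)"
      by (simp add: power_minus' power_divide) (simp add: mult_ac)
  qed
  then show ?thesis by (simp add: I_def)
qed

lemma Proj_eq_scaled_hermite_integral:
  "Proj k s n G = Ifun k s ^ n * (\<integral>z. G (z / Ifun k s) * hermite n z * gauss z \<partial>lborel) / (2 ^ n * fact n)"
proof -
  define I where "I = Ifun k s"
  have I: "0 < I" by (simp add: I_def Ifun_pos)
  have "inner_rho k s G (Hpol k n s) = (\<integral>z. G (z / I) * Hpol k n s (z / I) * gauss z \<partial>lborel)"
    by (simp add: inner_rho_def integral_rho_eq_gauss I_def)
  also have "\<dots> = (\<integral>z. (1 / I) ^ n * (G (z / I) * hermite n z * gauss z) \<partial>lborel)"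
    by (simp add: Hpol_scaled I_def mult_ac)
  finally have num: "inner_rho k s G (Hpol k n s) = (1 / I) ^ n * (\<integral>z. G (z / I) * hermite n z * gauss z \<partial>lborel)"
    by (simp only: integral_mult_right_zero)
  have "inner_rho k s (Hpol k n s) (Hpol k n s) = (\<integral>z. Hpol k n s (z / I) * Hpol k n s (z / I) * gauss z \<partial>lborel)"
    by (simp add: inner_rho_def integral_rho_eq_gauss I_def)
  also have "\<dots> = (\<integral>z. ((1 / I) ^ n * (1 / I) ^ n) * (hermite n z * hermite n z * gauss z) \<partial>lborel)"
    by (simp add: Hpol_scaled I_def mult_ac)
  finally have den: "inner_rho k s (Hpol k n s) (Hpol k n s) = (1 / I) ^ n * (1 / I) ^ n * (2 ^ n * fact n)"
    by (simp only: integral_mult_right_zero hermite_norm)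
  show ?thesis
    unfolding Proj_def num den using I by (simp add: field_simps power_one_over I_def)
qed

definition gauss_weight_integral :: "nat \<Rightarrow> real" where
  "gauss_weight_integral D = (\<integral>z. (1 + \<bar>z\<bar>) ^ D * gauss z \<partial>lborel)"

lemma integrable_poly_weight_gauss: "integrable lborel (\<lambda>z. (1 + \<bar>z\<bar>) ^ D * gauss z)"
proof -
  have "(1 + \<bar>z\<bar>) ^ D * gauss z = (\<Sum>i\<le>D. real (D choose i) * (gauss z * \<bar>z\<bar> ^ i))" for z
    using binomial_ring[of "\<bar>z\<bar>" 1 D] by (simp add: add.commute sum_distrib_right sum_distrib_left mult_ac)
  then show ?thesis
    by (simp only:) (intro Bochner_Integration.integrable_sum integrable_mult_right integrable_gauss_abs_moment)
qed

lemma hermite_integral_polynomially_bounded: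
  fixes f :: "real \<Rightarrow> real"
  assumes f: "f \<in> borel_measurable borel" and bound: "\<And>z. \<bar>f z\<bar> \<le> K * (1 + \<bar>z\<bar>) ^ D"
  shows "integrable lborel (\<lambda>z. f z * hermite n z * gauss z)"
    and "\<bar>\<integral>z. f z * hermite n z * gauss z \<partial>lborel\<bar> \<le> K * hermite_abs_coeffs n * gauss_weight_integral (D + n)"
proof -
  define g where "g z = K * hermite_abs_coeffs n * ((1 + \<bar>z\<bar>) ^ (D + n) * gauss z)" for z
  have g: "integrable lborel g"
    unfolding g_def by (intro integrable_mult_right integrable_poly_weight_gauss)
  have le: "\<bar>f z * hermite n z * gauss z\<bar> \<le> g z" for z
  proof -
    have "0 \<le> K * (1 + \<bar>z\<bar>) ^ D" using bound[of z] by linarith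
    then have "\<bar>f z\<bar> * \<bar>hermite n z\<bar> * gauss z
        \<le> (K * (1 + \<bar>z\<bar>) ^ D) * (hermite_abs_coeffs n * (1 + \<bar>z\<bar>) ^ n) * gauss z"
      by (intro mult_right_mono mult_mono bound abs_hermite_le gauss_nonneg) simp_all
    then show ?thesis by (simp add: g_def abs_mult gauss_nonneg power_add mult_ac)
  qed
  show int: "integrable lborel (\<lambda>z. f z * hermite n z * gauss z)"
  proof (rule Bochner_Integration.integrable_bound[OF g])
    show "(\<lambda>z. f z * hermite n z * gauss z) \<in> borel_measurable lborel" using f by measurable
    show "AE z in lborel. norm (f z * hermite n z * gauss z) \<le> norm (g z)"
      using le by (intro AE_I2) (metis abs_ge_self order_trans real_norm_def)
  qed
  have "\<bar>\<integral>z. f z * hermite n z * gauss z \<partial>lborel\<bar> \<le> integral\<^sup>L lborel g"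
    by (rule integral_abs_bound_integral[OF int g le])
  also have "integral\<^sup>L lborel g = K * hermite_abs_coeffs n * gauss_weight_integral (D + n)"
    unfolding g_def[abs_def] gauss_weight_integral_def by (rule integral_mult_right_zero)
  finally show "\<bar>\<integral>z. f z * hermite n z * gauss z \<partial>lborel\<bar> \<le> K * hermite_abs_coeffs n * gauss_weight_integral (D + n)" .
qed

lemma Cauchy_coeff_le:
  fixes f :: "complex \<Rightarrow> complex"
  assumes holf: "f holomorphic_on ball 0 R" and r: "0 < r" "r < R"
    and B: "\<And>w. norm w \<le> r \<Longrightarrow> norm (f w) \<le> B"
  shows "norm ((deriv ^^ j) f 0 / fact j) \<le> B / r ^ j"
proof -
  have "norm ((deriv ^^ j) f 0) \<le> fact j * B / r ^ j"
  proof (rule Cauchy_inequality)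
    show "f holomorphic_on ball 0 r" using r by (intro holomorphic_on_subset[OF holf]) auto
    show "continuous_on (cball 0 r) f"
      by (rule continuous_on_subset[OF holomorphic_on_imp_continuous_on[OF holf]]) (use r in auto)
  qed (use r B in auto)
  then show ?thesis by (simp add: norm_divide field_simps)
qed

lemma holomorphic_Taylor_remainder_le:
  fixes f :: "complex \<Rightarrow> complex"
  assumes holf: "f holomorphic_on ball 0 R" and r: "0 < r" "r < R"
    and B: "\<And>w. norm w \<le> r \<Longrightarrow> norm (f w) \<le> B"
    and z: "norm z \<le> r / 2"
  shows "norm (f z - (\<Sum>j<n. (deriv ^^ j) f 0 / fact j * z ^ j)) \<le> 2 * B * (norm z / r) ^ n"
proof -
  define c where "c j = (deriv ^^ j) f 0 / fact j" for j
  have cb: "norm (c j) \<le> B / r ^ j" for j unfolding c_def by (rule Cauchy_coeff_le[OF holf r B])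
  have B0: "0 \<le> B" using B[of 0] r by (simp add: order_trans[OF norm_ge_zero])
  have zR: "z \<in> ball 0 R" using z r by auto
  have sums: "(\<lambda>j. c j * z ^ j) sums f z"
    using holomorphic_power_series[OF holf zR] by (simp add: c_def)
  define t where "t = norm z / r"
  have t: "0 \<le> t" "t \<le> 1/2" using z r by (auto simp: t_def field_simps)
  have tb: "norm (c j * z ^ j) \<le> B * t ^ j" for j
  proof -
    have "norm (c j * z ^ j) = norm (c j) * norm z ^ j" by (simp add: norm_mult norm_power)
    also have "\<dots> \<le> B / r ^ j * norm z ^ j" by (rule mult_right_mono[OF cb]) simp
    also have "\<dots> = B * t ^ j" by (simp add: t_def power_divide)
    finally show ?thesis .
  qed
  have gs: "summable (\<lambda>j. B * t ^ j)" using t by (intro summable_mult summable_geometric) auto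
  have sr: "(\<lambda>j. c (j + n) * z ^ (j + n)) sums (f z - (\<Sum>j<n. c j * z ^ j))"
    using sums_split_initial_segment[OF sums, of n] by simp
  have "norm (f z - (\<Sum>j<n. c j * z ^ j)) \<le> (\<Sum>j. B * t ^ n * t ^ j)"
    unfolding sums_unique[OF sr]
  proof (rule norm_suminf_le)
    show "norm (c (j + n) * z ^ (j + n)) \<le> B * t ^ n * t ^ j" for j
      using tb[of "j+n"] by (simp add: power_add mult_ac)
    show "summable (\<lambda>j. B * t ^ n * t ^ j)" using t by (intro summable_mult summable_geometric) auto
  qed
  also have "\<dots> = B * t ^ n * (1 / (1 - t))"
    using t by (subst suminf_mult) (auto intro: summable_geometric simp: suminf_geometric)
  also have "\<dots> \<le> B * t ^ n * 2"
    using t B0 by (intro mult_left_mono) (auto simp: field_simps)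
  finally show ?thesis by (simp add: c_def t_def mult_ac)
qed

lemma abs_Taylor_polynomial_le:
  fixes c :: "nat \<Rightarrow> complex" and z :: real
  assumes c: "\<And>j. norm (c j) \<le> B / (R / 2) ^ j" and B: "0 \<le> B" and R: "R > 0"
    and far: "1 \<le> 4 * \<bar>z\<bar> / R"
  shows "\<bar>\<Sum>j<n. Re (c j) * z ^ j\<bar> \<le> real n * B * (4 * \<bar>z\<bar> / R) ^ n"
proof -
  define t where "t = 4 * \<bar>z\<bar> / R"
  have "\<bar>Re (c j) * z ^ j\<bar> \<le> B * t ^ n" if "j < n" for j
  proof -
    have "\<bar>Re (c j) * z ^ j\<bar> \<le> norm (c j) * \<bar>z\<bar> ^ j"
      by (simp add: abs_mult power_abs mult_right_mono abs_Re_le_cmod)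
    also have "\<dots> \<le> B / (R / 2) ^ j * \<bar>z\<bar> ^ j"
      by (rule mult_right_mono[OF c]) simp
    also have "\<dots> = B * (t / 2) ^ j"
      by (simp add: t_def power_divide)
    also have "\<dots> \<le> B * t ^ n"
      using B far that R by (intro mult_left_mono order_trans[OF power_mono power_increasing])
        (auto simp: t_def intro: divide_right_mono)
    finally show ?thesis .
  qed
  then have "\<bar>\<Sum>j<n. Re (c j) * z ^ j\<bar> \<le> (\<Sum>j<n. B * t ^ n)"
    by (intro order_trans[OF sum_abs sum_mono]) auto
  then show ?thesis by (simp add: t_def)
qed

lemma real_Taylor_remainder_le:
  fixes f :: "complex \<Rightarrow> complex" and F G :: "real \<Rightarrow> real"
  assumes holf: "f holomorphic_on ball 0 R" and R: "R > 0"
    and fb: "\<And>w. norm w \<le> R/2 \<Longrightarrow> norm (f w) \<le> B"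
    and fr: "\<And>z. \<bar>z\<bar> \<le> R/4 \<Longrightarrow> f (of_real z) = of_real (F z)"
    and Fb: "\<And>z. \<bar>F z\<bar> \<le> G z"
  shows "\<bar>F z - (\<Sum>j<n. Re ((deriv ^^ j) f 0 / fact j) * z ^ j)\<bar>
           \<le> (real n + 2) * B * (4 * \<bar>z\<bar> / R) ^ n + G z * (4 * \<bar>z\<bar> / R) ^ (n + 2)"
proof -
  define c where "c j = (deriv ^^ j) f 0 / fact j" for j
  define t where "t = 4 * \<bar>z\<bar> / R"
  have t0: "0 \<le> t" using R by (simp add: t_def)
  have B0: "0 \<le> B" using fb[of 0] R by (simp add: order_trans[OF norm_ge_zero])
  have G0: "0 \<le> G z" using Fb[of z] by linarith
  have cb: "norm (c j) \<le> B / (R/2) ^ j" for j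
    unfolding c_def by (rule Cauchy_coeff_le[OF holf]) (use R fb in auto)
  have Gt: "0 \<le> G z * t ^ (n + 2)" using G0 t0 by simp
  have Bt: "0 \<le> B * t ^ n" using B0 t0 by simp
  show ?thesis
  proof (cases "\<bar>z\<bar> \<le> R/4")
    case True
    have zn: "norm (of_real z :: complex) \<le> (R/2) / 2" using True by simp
    have "norm (f (of_real z) - (\<Sum>j<n. c j * (of_real z) ^ j)) \<le> 2 * B * (norm (of_real z :: complex) / (R/2)) ^ n"
      unfolding c_def by (rule holomorphic_Taylor_remainder_le[OF holf _ _ fb zn]) (use R in auto)
    also have "\<dots> = 2 * B * (t / 2) ^ n" by (simp add: t_def mult.commute)
    also have "\<dots> \<le> 2 * B * t ^ n"
      using B0 t0 by (intro mult_left_mono power_mono) auto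
    finally have remainder: "norm (f (of_real z) - (\<Sum>j<n. c j * (of_real z) ^ j)) \<le> 2 * B * t ^ n" .
    have "F z - (\<Sum>j<n. Re (c j) * z ^ j) = Re (f (of_real z) - (\<Sum>j<n. c j * (of_real z) ^ j))"
      using fr[OF True] by (simp add: Re_sum)
    then have "\<bar>F z - (\<Sum>j<n. Re (c j) * z ^ j)\<bar> \<le> 2 * B * t ^ n"
      using remainder abs_Re_le_cmod order_trans by metis
    also have "\<dots> \<le> (real n + 2) * B * t ^ n"
    proof -
      have "2 * (B * t ^ n) \<le> (real n + 2) * (B * t ^ n)" by (rule mult_right_mono) (use Bt in auto)
      then show ?thesis by (simp add: mult.assoc)
    qed
    finally show ?thesis using Gt by (simp add: c_def t_def)
  next
    case False
    then have t1: "1 \<le> t" using R by (simp add: t_def field_simps)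
    have poly_le: "\<bar>\<Sum>j<n. Re (c j) * z ^ j\<bar> \<le> real n * B * t ^ n"
      unfolding t_def by (rule abs_Taylor_polynomial_le[OF cb B0 R t1[unfolded t_def]])
    have F_le: "\<bar>F z\<bar> \<le> G z * t ^ (n + 2)"
    proof -
      have "G z * 1 \<le> G z * t ^ (n + 2)" using G0 t1 by (intro mult_left_mono one_le_power) auto
      then show ?thesis using Fb[of z] by simp
    qed
    have "\<bar>F z - (\<Sum>j<n. Re (c j) * z ^ j)\<bar> \<le> \<bar>F z\<bar> + \<bar>\<Sum>j<n. Re (c j) * z ^ j\<bar>" by (rule abs_triangle_ineq4)
    also have "\<dots> \<le> (real n + 2) * B * t ^ n + G z * t ^ (n + 2)" using poly_le F_le Bt by (simp add: algebra_simps)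
    finally show ?thesis by (simp add: c_def t_def)
  qed
qed

lemma mult_powr_pred: "0 \<le> (x::real) \<Longrightarrow> x * x powr (p - 1) = x powr p"
  using powr_mult_base[of x "p - 1"] by simp

lemma powr_diff_le:
  fixes p s t :: real
  assumes p: "p \<ge> 1" and s: "0 \<le> s" "s \<le> t"
  shows "t powr p - s powr p \<le> p * (t - s) * t powr (p - 1)"
proof (cases "s = 0")
  case True
  have "t powr p = t * t powr (p - 1)"
    using s by (simp add: mult_powr_pred)
  also have "\<dots> \<le> p * t * t powr (p - 1)"
  proof -
    have "1 * t \<le> p * t" by (rule mult_right_mono) (use p s in auto)
    then show ?thesis by (intro mult_right_mono) auto
  qed
  finally show ?thesis using True p by simp
next
  case False
  then have s0: "s > 0" using s by simp
  show ?thesis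
  proof (cases "s = t")
    case False
    then have st: "s < t" using s by simp
    have d: "\<And>x. s \<le> x \<Longrightarrow> x \<le> t \<Longrightarrow> ((\<lambda>x. x powr p) has_real_derivative p * x powr (p-1)) (at x)"
      using s0 by (intro has_real_derivative_powr) auto
    obtain z where z: "s < z" "z < t" "t powr p - s powr p = (t - s) * (p * z powr (p - 1))"
      using MVT2[OF st d] by blast
    have "z powr (p - 1) \<le> t powr (p - 1)" using z s0 p by (intro powr_mono2) auto
    then have "(t - s) * (p * z powr (p - 1)) \<le> (t - s) * (p * t powr (p - 1))"
      using st p by (intro mult_left_mono) auto
    then show ?thesis using z by (simp add: mult_ac)
  qed simp
qed

definition signed_powr :: "real \<Rightarrow> real \<Rightarrow> real" where "signed_powr p t = \<bar>t\<bar> powr (p - 1) * t"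

lemma signed_powr_nonneg: "0 \<le> t \<Longrightarrow> signed_powr p t = t powr p"
  unfolding signed_powr_def by (simp add: mult_powr_pred mult.commute)

lemma signed_powr_nonpos: "t \<le> 0 \<Longrightarrow> signed_powr p t = - ((-t) powr p)"
  unfolding signed_powr_def using mult_powr_pred[of "-t" p] by (simp add: mult.commute)

lemma signed_powr_lipschitz_le:
  fixes p s t :: real
  assumes p: "p \<ge> 1" and st: "s \<le> t"
  shows "\<bar>signed_powr p t - signed_powr p s\<bar> \<le> p * \<bar>t - s\<bar> * (\<bar>t\<bar> + \<bar>s\<bar>) powr (p - 1)"
proof -
  have mono: "(a::real) powr (p-1) \<le> (\<bar>t\<bar> + \<bar>s\<bar>) powr (p - 1)" if "0 \<le> a" "a \<le> \<bar>t\<bar> + \<bar>s\<bar>" for a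
    using that p by (intro powr_mono2) auto
  consider (nonneg) "0 \<le> s" | (nonpos) "t \<le> 0" | (mixed) "s < 0" "0 < t" by linarith
  then show ?thesis
  proof cases
    case nonneg
    have "t powr p - s powr p \<le> p * (t - s) * t powr (p - 1)" by (rule powr_diff_le[OF p nonneg st])
    also have "\<dots> \<le> p * (t - s) * (\<bar>t\<bar> + \<bar>s\<bar>) powr (p - 1)"
      using p st nonneg by (intro mult_left_mono mono) auto
    moreover have "s powr p \<le> t powr p" using nonneg st p by (intro powr_mono2) auto
    ultimately show ?thesis using nonneg st by (simp add: signed_powr_nonneg)
  next
    case nonpos
    have "(-s) powr p - (-t) powr p \<le> p * (t - s) * (-s) powr (p - 1)"
      using powr_diff_le[OF p, of "-t" "-s"] nonpos st by simp
    also have "\<dots> \<le> p * (t - s) * (\<bar>t\<bar> + \<bar>s\<bar>) powr (p - 1)"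
      using p st nonpos by (intro mult_left_mono mono) auto
    moreover have "(-t) powr p \<le> (-s) powr p" using nonpos st p by (intro powr_mono2) auto
    ultimately show ?thesis using nonpos st by (simp add: signed_powr_nonpos)
  next
    case mixed
    have "signed_powr p t - signed_powr p s = t * t powr (p-1) + (-s) * (-s) powr (p-1)"
      using mixed mult_powr_pred[of t p] mult_powr_pred[of "-s" p] by (simp add: signed_powr_nonneg signed_powr_nonpos)
    also have "\<dots> \<le> t * (\<bar>t\<bar> + \<bar>s\<bar>) powr (p - 1) + (-s) * (\<bar>t\<bar> + \<bar>s\<bar>) powr (p - 1)"
      using mixed by (intro add_mono mult_left_mono mono) auto
    also have "\<dots> = 1 * \<bar>t - s\<bar> * (\<bar>t\<bar> + \<bar>s\<bar>) powr (p - 1)" using mixed by (simp add: algebra_simps)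
    also have "\<dots> \<le> p * \<bar>t - s\<bar> * (\<bar>t\<bar> + \<bar>s\<bar>) powr (p - 1)"
      using p by (intro mult_right_mono) auto
    finally show ?thesis using mixed by (simp add: signed_powr_nonneg signed_powr_nonpos)
  qed
qed

lemma signed_powr_lipschitz:
  fixes p s t :: real
  assumes p: "p \<ge> 1"
  shows "\<bar>signed_powr p t - signed_powr p s\<bar> \<le> p * \<bar>t - s\<bar> * (\<bar>t\<bar> + \<bar>s\<bar>) powr (p - 1)"
proof (cases "s \<le> t")
  case True then show ?thesis using signed_powr_lipschitz_le[OF p] by blast
next
  case False
  then have "\<bar>signed_powr p s - signed_powr p t\<bar> \<le> p * \<bar>s - t\<bar> * (\<bar>s\<bar> + \<bar>t\<bar>) powr (p - 1)"
    using signed_powr_lipschitz_le[OF p] by simp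
  then show ?thesis by (simp add: abs_minus_commute add.commute)
qed

definition nonlin :: "real \<Rightarrow> real \<Rightarrow> real" where
  "nonlin p x = \<bar>1 + x\<bar> powr (p - 1) * (1 + x) - 1 - p * x"

lemma nonlin_eq_signed_powr: "nonlin p x = signed_powr p (1 + x) - 1 - p * x"
  by (simp add: nonlin_def signed_powr_def)

lemma nat_ceiling_bounds: "(p::real) > 1 \<Longrightarrow> p \<le> real (nat \<lceil>p\<rceil>) \<and> 1 \<le> nat \<lceil>p\<rceil>"
proof -
  assume p: "p > 1"
  have c: "p \<le> of_int \<lceil>p\<rceil>" by (rule le_of_int_ceiling)
  then have "\<lceil>p\<rceil> \<ge> 1" using p by linarith
  then have "real (nat \<lceil>p\<rceil>) = of_int \<lceil>p\<rceil>" by simp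
  then show ?thesis using c \<open>\<lceil>p\<rceil> \<ge> 1\<close> by linarith
qed

lemma powr_le_power: "1 \<le> (X::real) \<Longrightarrow> a \<le> real N \<Longrightarrow> X powr a \<le> X ^ N"
  using powr_mono[of a "real N" X] by (simp add: powr_realpow)

lemma nonlin_lipschitz:
  fixes p a c :: real
  assumes p: "p > 1"
  shows "\<bar>nonlin p (a + c) - nonlin p a\<bar> \<le> p * (2 ^ nat \<lceil>p\<rceil> + 1) * \<bar>c\<bar> * (1 + \<bar>a\<bar> + \<bar>c\<bar>) ^ nat \<lceil>p\<rceil>"
proof -
  define N where "N = nat \<lceil>p\<rceil>"
  define X where "X = 1 + \<bar>a\<bar> + \<bar>c\<bar>"
  have X1: "1 \<le> X" by (simp add: X_def)
  have "\<bar>nonlin p (a + c) - nonlin p a\<bar> = \<bar>(signed_powr p (1 + a + c) - signed_powr p (1 + a)) - p * c\<bar>"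
    by (simp add: nonlin_eq_signed_powr algebra_simps)
  also have "\<dots> \<le> \<bar>signed_powr p (1 + a + c) - signed_powr p (1 + a)\<bar> + p * \<bar>c\<bar>"
    using p by (intro order_trans[OF abs_triangle_ineq4]) (simp add: abs_mult)
  also have "\<bar>signed_powr p (1 + a + c) - signed_powr p (1 + a)\<bar> \<le> p * \<bar>c\<bar> * (\<bar>1 + a + c\<bar> + \<bar>1 + a\<bar>) powr (p - 1)"
    using signed_powr_lipschitz[of p "1 + a + c" "1 + a"] p by simp
  also have "(\<bar>1 + a + c\<bar> + \<bar>1 + a\<bar>) powr (p - 1) \<le> (2 * X) powr (p - 1)"
    using p by (intro powr_mono2) (auto simp: X_def)
  also have "\<dots> \<le> (2 * X) ^ N"
    using X1 nat_ceiling_bounds[OF p] by (intro powr_le_power) (auto simp: N_def)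
  finally have "\<bar>nonlin p (a + c) - nonlin p a\<bar> \<le> p * \<bar>c\<bar> * (2 * X) ^ N + p * \<bar>c\<bar>"
    using p by (simp add: mult_left_mono)
  also have "\<dots> \<le> p * (2 ^ N + 1) * \<bar>c\<bar> * X ^ N"
  proof -
    have "p * \<bar>c\<bar> * 1 \<le> p * \<bar>c\<bar> * X ^ N" using X1 p
      by (intro mult_left_mono) (auto simp: one_le_power)
    then show ?thesis by (simp add: power_mult_distrib algebra_simps)
  qed
  finally show ?thesis by (simp add: N_def X_def)
qed

lemma abs_nonlin_le:
  fixes p x :: real
  assumes p: "p > 1"
  shows "\<bar>nonlin p x\<bar> \<le> (2 + p) * (1 + \<bar>x\<bar>) ^ nat \<lceil>p\<rceil>"
proof -
  define N where "N = nat \<lceil>p\<rceil>"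
  have X1: "1 \<le> 1 + \<bar>x\<bar>" by simp
  have XN: "1 \<le> (1 + \<bar>x\<bar>) ^ N" by (simp add: one_le_power)
  have "\<bar>signed_powr p (1 + x)\<bar> = \<bar>1 + x\<bar> powr p"
    unfolding signed_powr_def by (simp add: abs_mult mult_powr_pred mult.commute)
  also have "\<dots> \<le> (1 + \<bar>x\<bar>) powr p" using p by (intro powr_mono2) auto
  also have "\<dots> \<le> (1 + \<bar>x\<bar>) ^ N" using p nat_ceiling_bounds[OF p] by (intro powr_le_power) (auto simp: N_def)
  finally have powr_le: "\<bar>signed_powr p (1 + x)\<bar> \<le> (1 + \<bar>x\<bar>) ^ N" .
  have linear_le: "1 + p * \<bar>x\<bar> \<le> (1 + p) * (1 + \<bar>x\<bar>) ^ N"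
  proof -
    have "1 + p * \<bar>x\<bar> \<le> (1 + p) * (1 + \<bar>x\<bar>)" using p by (simp add: algebra_simps)
    also have "\<dots> \<le> (1 + p) * (1 + \<bar>x\<bar>) ^ N"
    proof -
      have "N \<ge> 1" using nat_ceiling_bounds[OF p] by (simp add: N_def)
      then have "(1 + \<bar>x\<bar>) ^ 1 \<le> (1 + \<bar>x\<bar>) ^ N" by (intro power_increasing) auto
      then show ?thesis using p by (intro mult_left_mono) auto
    qed
    finally show ?thesis .
  qed
  have "\<bar>nonlin p x\<bar> \<le> \<bar>signed_powr p (1 + x)\<bar> + 1 + p * \<bar>x\<bar>"
    unfolding nonlin_eq_signed_powr using p abs_triangle_ineq4[of "signed_powr p (1+x) - 1" "p*x"] abs_triangle_ineq4[of "signed_powr p (1+x)" 1]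
    by (simp add: abs_mult)
  also have "\<dots> \<le> (2 + p) * (1 + \<bar>x\<bar>) ^ N" using powr_le linear_le by (simp add: algebra_simps)
  finally show ?thesis by (simp add: N_def)
qed

definition nonlin_complex :: "real \<Rightarrow> complex \<Rightarrow> complex" where
  "nonlin_complex p x = (1 + x) powr (of_real p) - 1 - of_real p * x"

lemma nonlin_complex_of_real:
  assumes "\<bar>x\<bar> < 1"
  shows "nonlin_complex p (of_real x) = of_real (nonlin p x)"
proof -
  have "1 + complex_of_real x = of_real (1 + x)" by simp
  then have "(1 + complex_of_real x) powr of_real p = of_real ((1 + x) powr p)"
    using assms by (simp only: powr_of_real)
  moreover have "\<bar>1 + x\<bar> powr (p - 1) * (1 + x) = (1 + x) powr p"
    using assms mult_powr_pred[of "1 + x" p] by (simp add: mult.commute)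
  ultimately show ?thesis by (simp add: nonlin_complex_def nonlin_def)
qed

lemma one_plus_notin_nonpos_Reals: "norm (x::complex) < 1 \<Longrightarrow> 1 + x \<notin> \<real>\<^sub>\<le>\<^sub>0"
proof
  assume "norm x < 1" "1 + x \<in> \<real>\<^sub>\<le>\<^sub>0"
  then have "Re (1 + x) \<le> 0" by (simp add: complex_nonpos_Reals_iff)
  moreover have "\<bar>Re x\<bar> < 1" using abs_Re_le_cmod[of x] \<open>norm x < 1\<close> by linarith
  ultimately show False by simp
qed

lemma holomorphic_nonlin_complex_comp:
  assumes "X holomorphic_on S" "\<And>w. w \<in> S \<Longrightarrow> norm (X w) < 1"
  shows "(\<lambda>w. nonlin_complex p (X w)) holomorphic_on S"
  unfolding nonlin_complex_def using assms one_plus_notin_nonpos_Reals by (intro holomorphic_intros) auto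

lemma holomorphic_nonlin_complex: "nonlin_complex p holomorphic_on ball 0 1"
  using holomorphic_nonlin_complex_comp[of "\<lambda>x. x" "ball 0 1" p] by (simp add: holomorphic_on_ident)

lemma nonlin_complex_0: "nonlin_complex p 0 = 0" by (simp add: nonlin_complex_def)

lemma deriv_nonlin_complex_0: "deriv (nonlin_complex p) 0 = 0"
proof -
  have d1: "((\<lambda>z. z powr of_real p) has_field_derivative of_real p) (at (1::complex))"
    using has_field_derivative_powr[of 1 "of_real p"] by simp
  have d2: "((\<lambda>x::complex. 1 + x) has_field_derivative 1) (at 0)" by (auto intro!: derivative_eq_intros)
  have "((\<lambda>x::complex. (\<lambda>z. z powr of_real p) ((\<lambda>x. 1 + x) x)) has_field_derivative of_real p * 1) (at 0)"
    by (rule DERIV_chain2[of "\<lambda>z. z powr of_real p" _ "\<lambda>x. 1 + x"]) (use d1 d2 in simp_all)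
  then have "(nonlin_complex p has_field_derivative (of_real p - of_real p)) (at 0)"
    unfolding nonlin_complex_def[abs_def] by (auto intro!: derivative_eq_intros)
  then show ?thesis by (simp add: DERIV_imp_deriv)
qed

lemma norm_nonlin_complex_le:
  assumes p: "p > 1" and x: "norm x \<le> 1/4"
  shows "norm (nonlin_complex p x) \<le> 8 * (2 powr p + 1 + p) * norm x ^ 2"
proof -
  define B where "B = 2 powr p + 1 + p"
  have Bb: "norm (nonlin_complex p w) \<le> B" if w: "norm w \<le> 1/2" for w
  proof -
    have "norm ((1 + w) powr of_real p) = norm (1 + w) powr p"
      by (simp add: norm_powr_real_powr')
    also have "\<dots> \<le> 2 powr p"
    proof (rule powr_mono2)
      show "norm (1 + w) \<le> 2" using w norm_triangle_ineq[of 1 w] by simp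
    qed (use p in auto)
    finally have powr_le: "norm ((1 + w) powr of_real p) \<le> 2 powr p" .
    have "norm (nonlin_complex p w) \<le> norm ((1 + w) powr of_real p) + 1 + p * norm w"
    proof -
      have "norm (nonlin_complex p w) \<le> norm ((1 + w) powr of_real p - 1) + norm (of_real p * w)"
        unfolding nonlin_complex_def by (rule norm_triangle_ineq4)
      also have "norm ((1 + w) powr of_real p - 1) \<le> norm ((1 + w) powr of_real p) + 1"
        using norm_triangle_ineq4[of "(1 + w) powr of_real p" 1] by simp
      also have "norm (complex_of_real p * w) = p * norm w" using p by (simp add: norm_mult)
      finally show ?thesis by simp
    qed
    also have "\<dots> \<le> B"
    proof -
      have "p * norm w \<le> p * 1" using w p by (intro mult_left_mono) auto
      then show ?thesis using powr_le by (simp add: B_def)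
    qed
    finally show ?thesis .
  qed
  have "norm (nonlin_complex p x - (\<Sum>j<2. (deriv ^^ j) (nonlin_complex p) 0 / fact j * x ^ j)) \<le> 2 * B * (norm x / (1/2)) ^ 2"
    by (rule holomorphic_Taylor_remainder_le[OF holomorphic_nonlin_complex, of "1/2"]) (use Bb x in auto)
  moreover have "(\<Sum>j<2. (deriv ^^ j) (nonlin_complex p) 0 / fact j * x ^ j) = 0"
    by (simp add: numeral_2_eq_2 nonlin_complex_0 deriv_nonlin_complex_0)
  ultimately show ?thesis by (simp add: B_def power2_eq_square field_simps)
qed

lemma abs_eb_le:
  assumes "p > 1" and "0 \<le> b"
  shows "\<bar>eb p k b y\<bar> \<le> 1 / (p - 1)"
proof -
  have d: "p - 1 \<le> p - 1 + b * y ^ (2 * k)"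
    using assms by (simp add: power_mult zero_le_even_power)
  then have "\<bar>eb p k b y\<bar> = 1 / (p - 1 + b * y ^ (2 * k))"
    using assms by (simp add: eb_def)
  also have "\<dots> \<le> 1 / (p - 1)"
    using d assms by (intro divide_left_mono mult_pos_pos) linarith+
  finally show ?thesis .
qed

definition eb_complex :: "real \<Rightarrow> nat \<Rightarrow> real \<Rightarrow> real \<Rightarrow> complex \<Rightarrow> complex" where
  "eb_complex p k b I w = 1 / (of_real (p - 1) + of_real b * (w / of_real I) ^ (2 * k))"

lemma eb_complex_of_real: "eb_complex p k b I (of_real z) = of_real (eb p k b (z / I))"
  by (simp add: eb_complex_def eb_def)

lemma eb_complex_denominator_ge:
  fixes w :: complex
  assumes p: "p > 1" and b: "0 \<le> b" "b * \<rho> \<le> (p - 1) / 2" and \<rho>: "0 \<le> \<rho>" "\<rho> \<le> 1"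
    and I: "I > 0" and k: "k \<ge> 1" and w: "norm w \<le> \<rho> * I"
  shows "(p - 1) / 2 \<le> norm (of_real (p - 1) + of_real b * (w / of_real I) ^ (2 * k))"
proof -
  have "norm w / I \<le> \<rho>" using w I by (simp add: divide_le_eq mult.commute)
  have "norm (of_real b * (w / of_real I) ^ (2 * k)) = b * (norm w / I) ^ (2 * k)"
    using b I by (simp add: norm_mult norm_power norm_divide)
  also have "\<dots> \<le> b * \<rho> ^ (2 * k)"
    using b I \<open>norm w / I \<le> \<rho>\<close> by (intro mult_left_mono power_mono) auto
  also have "\<dots> \<le> b * \<rho>"
    using b \<rho> k power_decreasing[of 1 "2 * k" \<rho>] by (simp add: mult_left_mono)
  finally have "norm (of_real b * (w / of_real I) ^ (2 * k)) \<le> (p - 1) / 2"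
    using b by linarith
  then show ?thesis
    using p by (intro order_trans[OF _ norm_diff_ineq]) (simp del: of_real_diff)
qed

lemma norm_eb_complex_le:
  fixes w :: complex
  assumes "p > 1" "0 \<le> b" "b * \<rho> \<le> (p - 1) / 2" "0 \<le> \<rho>" "\<rho> \<le> 1" "I > 0" "k \<ge> 1" "norm w \<le> \<rho> * I"
  shows "norm (eb_complex p k b I w) \<le> 2 / (p - 1)"
proof -
  have "(p - 1) / 2 \<le> norm (of_real (p - 1) + of_real b * (w / of_real I) ^ (2 * k))"
    by (rule eb_complex_denominator_ge[OF assms])
  then show ?thesis
    using assms(1) unfolding eb_complex_def norm_divide
    by (simp add: divide_simps)
qed

lemma holomorphic_eb_complex:
  assumes "p > 1" "0 \<le> b" "b * \<rho> \<le> (p - 1) / 2" "0 \<le> \<rho>" "\<rho> \<le> 1" "I > 0" "k \<ge> 1"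
  shows "eb_complex p k b I holomorphic_on ball 0 (\<rho> * I)"
  unfolding eb_complex_def[abs_def]
proof (intro holomorphic_intros)
  fix w :: complex assume "w \<in> ball 0 (\<rho> * I)"
  then have "(p - 1) / 2 \<le> norm (of_real (p - 1) + of_real b * (w / of_real I) ^ (2 * k))"
    using assms by (intro eb_complex_denominator_ge) auto
  then show "of_real (p - 1) + of_real b * (w / of_real I) ^ (2 * k) \<noteq> 0"
    using assms(1) by auto
qed (use assms in auto)

text \<open>After the substitution \<open>y = z / I\<close>, the part \<open>\<Sum> q\<^sub>m H\<^sub>m(y)\<close> of \<open>q\<close> on the first Hermite modes.\<close>
definition scaled_hermite_sum :: "nat \<Rightarrow> (nat \<Rightarrow> real) \<Rightarrow> real \<Rightarrow> real \<Rightarrow> real" where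
  "scaled_hermite_sum N a I z = (\<Sum>m\<le>N. a m * (1 / I) ^ m * hermite m z)"

definition scaled_hermite_sum_complex :: "nat \<Rightarrow> (nat \<Rightarrow> real) \<Rightarrow> real \<Rightarrow> complex \<Rightarrow> complex" where
  "scaled_hermite_sum_complex N a I w = (\<Sum>m\<le>N. of_real (a m * (1 / I) ^ m) * hermite_complex m w)"

lemma scaled_hermite_sum_complex_of_real:
  "scaled_hermite_sum_complex N a I (of_real z) = of_real (scaled_hermite_sum N a I z)"
  by (simp add: scaled_hermite_sum_complex_def scaled_hermite_sum_def hermite_complex_of_real)

lemma holomorphic_scaled_hermite_sum_complex: "scaled_hermite_sum_complex N a I holomorphic_on S"
  unfolding scaled_hermite_sum_complex_def[abs_def] by (intro holomorphic_intros)

lemma abs_scaled_hermite_sum_le: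
  assumes I: "1 \<le> I" and a: "\<And>m. m \<le> N \<Longrightarrow> \<bar>a m\<bar> \<le> E"
  shows "\<bar>scaled_hermite_sum N a I z\<bar> \<le> E * (\<Sum>m\<le>N. hermite_abs_coeffs m) * (1 + \<bar>z\<bar>) ^ N"
proof -
  have "\<bar>a m * (1 / I) ^ m * hermite m z\<bar> \<le> E * (hermite_abs_coeffs m * (1 + \<bar>z\<bar>) ^ N)" if "m \<le> N" for m
  proof -
    have "\<bar>hermite m z\<bar> \<le> hermite_abs_coeffs m * (1 + \<bar>z\<bar>) ^ N"
      using that abs_hermite_le[of m z] hermite_abs_coeffs_nonneg[of m]
      by (meson order_trans mult_left_mono power_increasing le_add_same_cancel1 abs_ge_zero)
    moreover have "\<bar>(1 / I) ^ m\<bar> \<le> 1"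
      using I by (simp add: power_le_one)
    ultimately have "\<bar>a m\<bar> * \<bar>(1 / I) ^ m\<bar> * \<bar>hermite m z\<bar> \<le> E * 1 * (hermite_abs_coeffs m * (1 + \<bar>z\<bar>) ^ N)"
      using that a[of m] by (intro mult_mono) auto
    then show ?thesis by (simp add: abs_mult)
  qed
  then have "\<bar>scaled_hermite_sum N a I z\<bar> \<le> (\<Sum>m\<le>N. E * (hermite_abs_coeffs m * (1 + \<bar>z\<bar>) ^ N))"
    unfolding scaled_hermite_sum_def by (intro order_trans[OF sum_abs] sum_mono) auto
  then show ?thesis
    by (simp add: sum_distrib_left sum_distrib_right mult_ac)
qed

lemma norm_scaled_hermite_sum_complex_le:
  assumes I: "1 \<le> I" and a: "\<And>m. m \<le> N \<Longrightarrow> \<bar>a m\<bar> \<le> E" and w: "norm w \<le> I"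
  shows "norm (scaled_hermite_sum_complex N a I w) \<le> E * (\<Sum>m\<le>N. hermite_abs_coeffs m * 2 ^ m)"
proof -
  have "norm (of_real (a m * (1 / I) ^ m) * hermite_complex m w) \<le> E * (hermite_abs_coeffs m * 2 ^ m)"
    if "m \<le> N" for m
  proof -
    have "(1 / I) ^ m * norm (hermite_complex m w) \<le> (1 / I) ^ m * (hermite_abs_coeffs m * (1 + norm w) ^ m)"
      using I by (intro mult_left_mono norm_hermite_complex_le) auto
    also have "\<dots> = hermite_abs_coeffs m * ((1 + norm w) / I) ^ m"
      by (simp add: power_divide)
    also have "\<dots> \<le> hermite_abs_coeffs m * 2 ^ m"
      using I w by (intro mult_left_mono power_mono hermite_abs_coeffs_nonneg) (auto simp: field_simps)
    finally have "(1 / I) ^ m * norm (hermite_complex m w) \<le> hermite_abs_coeffs m * 2 ^ m" .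
    then have "\<bar>a m\<bar> * ((1 / I) ^ m * norm (hermite_complex m w)) \<le> E * (hermite_abs_coeffs m * 2 ^ m)"
      using that a[of m] I by (rule_tac mult_mono) auto
    then show ?thesis
      using I by (simp add: norm_mult abs_mult del: of_real_mult of_real_power of_real_divide)
  qed
  then have "norm (scaled_hermite_sum_complex N a I w) \<le> (\<Sum>m\<le>N. E * (hermite_abs_coeffs m * 2 ^ m))"
    unfolding scaled_hermite_sum_complex_def by (intro order_trans[OF norm_sum] sum_mono) auto
  then show ?thesis
    by (simp add: sum_distrib_left)
qed

text \<open>A holomorphic extension \<open>X\<close> of \<open>x\<close> of size \<open>\<epsilon>\<close> on a disc of radius \<open>R\<close> makes \<open>nonlin p \<circ> X\<close> of size
  \<open>\<epsilon>\<^sup>2\<close> there (the nonlinearity is quadratic at \<open>0\<close>); Cauchy's estimates then bound its Taylor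
  remainder near \<open>0\<close>, and the crude growth bound for \<open>nonlin\<close> does so for \<open>\<bar>z\<bar> > R / 4\<close>.\<close>
lemma nonlin_comp_Taylor:
  fixes X :: "complex \<Rightarrow> complex" and x :: "real \<Rightarrow> real"
  assumes p: "p > 1" and R: "R > 0" and holX: "X holomorphic_on ball 0 R"
    and X_le: "\<And>w. norm w \<le> R \<Longrightarrow> norm (X w) \<le> \<epsilon>" and \<epsilon>: "\<epsilon> \<le> 1 / 4"
    and X_real: "\<And>z. X (of_real z) = of_real (x z)"
  shows "\<exists>d. \<forall>z. \<bar>nonlin p (x z) - (\<Sum>j<n. d j * z ^ j)\<bar>
           \<le> (real n + 2) * (8 * (2 powr p + 1 + p)) * \<epsilon>\<^sup>2 * (4 * \<bar>z\<bar> / R) ^ n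
             + (2 + p) * (1 + \<bar>x z\<bar>) ^ nat \<lceil>p\<rceil> * (4 * \<bar>z\<bar> / R) ^ (n + 2)"
proof -
  define f where "f w = nonlin_complex p (X w)" for w
  have X_small: "norm (X w) \<le> 1 / 4" if "norm w \<le> R" for w
    using X_le[OF that] \<epsilon> by linarith
  have hol: "f holomorphic_on ball 0 R"
    unfolding f_def
  proof (rule holomorphic_nonlin_complex_comp[OF holX])
    fix w :: complex assume "w \<in> ball 0 R"
    then show "norm (X w) < 1" using X_small[of w] by simp
  qed
  have bound: "norm (f w) \<le> 8 * (2 powr p + 1 + p) * \<epsilon>\<^sup>2" if "norm w \<le> R / 2" for w
  proof -
    have w: "norm w \<le> R" using that R by simp
    have "norm (f w) \<le> 8 * (2 powr p + 1 + p) * norm (X w) ^ 2"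
      unfolding f_def by (rule norm_nonlin_complex_le[OF p X_small[OF w]])
    also have "\<dots> \<le> 8 * (2 powr p + 1 + p) * \<epsilon>\<^sup>2"
      using p X_le[OF w] by (intro mult_left_mono power_mono) auto
    finally show ?thesis .
  qed
  have real: "f (of_real z) = of_real (nonlin p (x z))" if "\<bar>z\<bar> \<le> R / 4" for z
  proof -
    have "norm (X (of_real z)) \<le> 1 / 4" using that R by (intro X_small) auto
    then have "\<bar>x z\<bar> < 1" by (simp add: X_real)
    then show ?thesis unfolding f_def X_real by (rule nonlin_complex_of_real)
  qed
  show ?thesis
  proof (intro exI[of _ "\<lambda>j. Re ((deriv ^^ j) f 0 / fact j)"] allI)
    fix z
    show "\<bar>nonlin p (x z) - (\<Sum>j<n. Re ((deriv ^^ j) f 0 / fact j) * z ^ j)\<bar>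
        \<le> (real n + 2) * (8 * (2 powr p + 1 + p)) * \<epsilon>\<^sup>2 * (4 * \<bar>z\<bar> / R) ^ n
          + (2 + p) * (1 + \<bar>x z\<bar>) ^ nat \<lceil>p\<rceil> * (4 * \<bar>z\<bar> / R) ^ (n + 2)"
      using real_Taylor_remainder_le[OF hol R bound real abs_nonlin_le[OF p], of z n]
      by (simp only: mult.assoc)
  qed
qed

lemma Taylor_terms_le:
  fixes A B K L \<rho> I \<delta> x z :: real and n N P :: nat
  assumes \<rho>: "\<rho> > 0" and I: "1 \<le> I" and \<delta>: "0 < \<delta>" "\<delta> \<le> 1"
    and A: "0 \<le> A" and B: "0 \<le> B" and K: "0 \<le> K" and x: "\<bar>x\<bar> \<le> K * (1 + \<bar>z\<bar>) ^ N"
  shows "A * (L * I powr - \<delta>)\<^sup>2 * (4 * \<bar>z\<bar> / (\<rho> * I)) ^ n + B * (1 + \<bar>x\<bar>) ^ P * (4 * \<bar>z\<bar> / (\<rho> * I)) ^ (n + 2)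
    \<le> (A * L\<^sup>2 * (4 / \<rho>) ^ n + B * (1 + K) ^ P * (4 / \<rho>) ^ (n + 2))
        * I powr (- real n - 2 * \<delta>) * (1 + \<bar>z\<bar>) ^ (N * P + n + 2)"
proof -
  define W where "W = 1 + \<bar>z\<bar>"
  define D where "D = N * P + n + 2"
  define J where "J = I powr (- real n - 2 * \<delta>)"
  have W: "1 \<le> W" "\<bar>z\<bar> \<le> W" by (auto simp: W_def)
  have J: "0 \<le> J" by (simp add: J_def)
  have scale: "(4 * \<bar>z\<bar> / (\<rho> * I)) ^ m = (4 / \<rho>) ^ m * \<bar>z\<bar> ^ m * I powr (- real m)" for m
    using I by (simp add: power_divide power_mult_distrib powr_minus powr_realpow field_simps)
  have t1: "A * (L * I powr - \<delta>)\<^sup>2 * (4 * \<bar>z\<bar> / (\<rho> * I)) ^ n \<le> A * L\<^sup>2 * (4 / \<rho>) ^ n * J * W ^ D"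
  proof -
    have "- real n - 2 * \<delta> = - \<delta> + - \<delta> + - real n" by simp
    then have EJ: "(I powr - \<delta>)\<^sup>2 * I powr (- real n) = J"
      unfolding J_def by (simp only: power2_eq_square powr_add)
    have "A * (L * I powr - \<delta>)\<^sup>2 * (4 * \<bar>z\<bar> / (\<rho> * I)) ^ n = A * L\<^sup>2 * (4 / \<rho>) ^ n * J * \<bar>z\<bar> ^ n"
      unfolding scale EJ[symmetric] power_mult_distrib by (simp only: mult_ac)
    also have "\<dots> \<le> A * L\<^sup>2 * (4 / \<rho>) ^ n * J * W ^ D"
      using A \<rho> J W by (intro mult_left_mono order_trans[OF power_mono power_increasing]) (auto simp: D_def)
    finally show ?thesis .
  qed
  have t2: "B * (1 + \<bar>x\<bar>) ^ P * (4 * \<bar>z\<bar> / (\<rho> * I)) ^ (n + 2) \<le> B * (1 + K) ^ P * (4 / \<rho>) ^ (n + 2) * J * W ^ D"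
  proof -
    have "1 \<le> W ^ N" using W by (simp add: one_le_power)
    then have "1 + \<bar>x\<bar> \<le> (1 + K) * W ^ N"
      using x[folded W_def] by (simp add: distrib_right)
    then have "(1 + \<bar>x\<bar>) ^ P \<le> ((1 + K) * W ^ N) ^ P"
      by (intro power_mono) auto
    also have "\<dots> = (1 + K) ^ P * W ^ (N * P)"
      by (simp add: power_mult_distrib power_mult)
    finally have f1: "(1 + \<bar>x\<bar>) ^ P \<le> (1 + K) ^ P * W ^ (N * P)" .
    have f2: "(4 * \<bar>z\<bar> / (\<rho> * I)) ^ (n + 2) \<le> (4 / \<rho>) ^ (n + 2) * W ^ (n + 2) * J"
    proof -
      have "I powr (- real (n + 2)) \<le> J"
        unfolding J_def using I \<delta> by (intro powr_mono) auto
      then show ?thesis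
        unfolding scale using \<rho> W by (intro mult_mono power_mono) auto
    qed
    have "B * (1 + \<bar>x\<bar>) ^ P * (4 * \<bar>z\<bar> / (\<rho> * I)) ^ (n + 2)
        \<le> B * ((1 + K) ^ P * W ^ (N * P)) * ((4 / \<rho>) ^ (n + 2) * W ^ (n + 2) * J)"
      by (rule mult_mono[OF mult_left_mono[OF f1 B] f2]) (use B K W I \<rho> in auto)
    also have "\<dots> = B * (1 + K) ^ P * (4 / \<rho>) ^ (n + 2) * J * W ^ D"
      by (simp add: D_def power_add mult_ac)
    finally show ?thesis .
  qed
  from t1 t2 show ?thesis
    by (simp add: J_def W_def D_def algebra_simps)
qed

lemma abs_eb_times_hermite_sum_le:
  assumes p: "p > 1" and b: "0 \<le> b" and I: "1 \<le> I" and a: "\<And>m. m \<le> N \<Longrightarrow> \<bar>a m\<bar> \<le> 1"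
  shows "\<bar>eb p k b y * scaled_hermite_sum N a I z\<bar> \<le> (\<Sum>m\<le>N. hermite_abs_coeffs m) / (p - 1) * (1 + \<bar>z\<bar>) ^ N"
proof -
  have "\<bar>scaled_hermite_sum N a I z\<bar> \<le> 1 * (\<Sum>m\<le>N. hermite_abs_coeffs m) * (1 + \<bar>z\<bar>) ^ N"
    using I a by (rule abs_scaled_hermite_sum_le)
  then have "\<bar>eb p k b y\<bar> * \<bar>scaled_hermite_sum N a I z\<bar>
      \<le> 1 / (p - 1) * ((\<Sum>m\<le>N. hermite_abs_coeffs m) * (1 + \<bar>z\<bar>) ^ N)"
    using abs_eb_le[OF p b] p by (intro mult_mono) auto
  then show ?thesis by (simp add: abs_mult)
qed

lemma eb_times_hermite_sum_complex:
  fixes w :: complex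
  assumes p: "p > 1" and k: "k \<ge> 1" and b: "0 \<le> b" "b * \<rho> \<le> (p - 1) / 2" and \<rho>: "0 < \<rho>" "\<rho> \<le> 1"
    and I: "1 \<le> I" and a: "\<forall>m\<le>N. \<bar>a m\<bar> \<le> E"
  shows "(\<lambda>w. eb_complex p k b I w * scaled_hermite_sum_complex N a I w) holomorphic_on ball 0 (\<rho> * I)"
    and "norm w \<le> \<rho> * I \<Longrightarrow> norm (eb_complex p k b I w * scaled_hermite_sum_complex N a I w)
      \<le> 2 / (p - 1) * (\<Sum>m\<le>N. hermite_abs_coeffs m * 2 ^ m) * E"
proof -
  show "(\<lambda>w. eb_complex p k b I w * scaled_hermite_sum_complex N a I w) holomorphic_on ball 0 (\<rho> * I)"
    by (rule holomorphic_on_mult[OF holomorphic_eb_complex holomorphic_scaled_hermite_sum_complex])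
      (use p k b \<rho> I in auto)
  assume w: "norm w \<le> \<rho> * I"
  have "\<rho> * I \<le> I" using \<rho> I by (simp add: mult_left_le_one_le)
  then have "norm w \<le> I" using w by linarith
  have "norm (eb_complex p k b I w) * norm (scaled_hermite_sum_complex N a I w)
      \<le> 2 / (p - 1) * (E * (\<Sum>m\<le>N. hermite_abs_coeffs m * 2 ^ m))"
  proof (rule mult_mono)
    show "norm (eb_complex p k b I w) \<le> 2 / (p - 1)"
      using p b \<rho> I k w by (intro norm_eb_complex_le) auto
    show "norm (scaled_hermite_sum_complex N a I w) \<le> E * (\<Sum>m\<le>N. hermite_abs_coeffs m * 2 ^ m)"
      using I a \<open>norm w \<le> I\<close> by (intro norm_scaled_hermite_sum_complex_le) auto
  qed (use p in auto)
  then show "norm (eb_complex p k b I w * scaled_hermite_sum_complex N a I w)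
      \<le> 2 / (p - 1) * (\<Sum>m\<le>N. hermite_abs_coeffs m * 2 ^ m) * E"
    by (simp add: norm_mult mult_ac)
qed

lemma powr_neg_le_quarter:
  fixes K \<delta> I :: real
  assumes K: "0 \<le> K" and \<delta>: "0 < \<delta>" and I: "max 1 ((4 * K + 1) powr (1 / \<delta>)) \<le> I"
  shows "K * I powr - \<delta> \<le> 1 / 4"
proof -
  have "((4 * K + 1) powr (1 / \<delta>)) powr \<delta> \<le> I powr \<delta>"
    using I \<delta> by (intro powr_mono2) auto
  moreover have "((4 * K + 1) powr (1 / \<delta>)) powr \<delta> = 4 * K + 1"
    using \<delta> K by (simp add: powr_powr)
  ultimately have le: "4 * K + 1 \<le> I powr \<delta>" by simp
  have "K * I powr - \<delta> = K / I powr \<delta>" by (simp add: powr_minus divide_inverse)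
  also have "\<dots> \<le> K / (4 * K + 1)"
    by (rule divide_left_mono[OF le]) (use K I in auto)
  also have "\<dots> \<le> 1 / 4" using K by (simp add: field_simps)
  finally show ?thesis .
qed

text \<open>The radius \<open>\<rho> I\<close> of the disc of holomorphy stays away from the zeros of \<open>p - 1 + b y\<^sup>2\<^sup>k\<close>,
  and \<open>I \<ge> I0\<close> makes the extension small enough for the Taylor estimate.\<close>
lemma nonlin_hermite_sum_expansion:
  fixes p b0 \<delta> :: real and k N n :: nat
  assumes p: "p > 1" and k: "k \<ge> 1" and b0: "b0 > 0" and \<delta>: "0 < \<delta>" "\<delta> \<le> 1"
  shows "\<exists>C I0. 1 \<le> I0 \<and> (\<forall>I b a. I0 \<le> I \<longrightarrow> 0 \<le> b \<longrightarrow> b \<le> 2 * b0 \<longrightarrow> (\<forall>m\<le>N. \<bar>a m\<bar> \<le> I powr - \<delta>) \<longrightarrow>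
     (\<exists>d. \<forall>z. \<bar>nonlin p (eb p k b (z / I) * scaled_hermite_sum N a I z) - (\<Sum>j<n. d j * z ^ j)\<bar>
        \<le> C * I powr (- real n - 2 * \<delta>) * (1 + \<bar>z\<bar>) ^ (N * nat \<lceil>p\<rceil> + n + 2)))"
proof -
  define \<rho> where "\<rho> = min 1 ((p - 1) / (4 * b0))"
  define Kx where "Kx = 2 / (p - 1) * (\<Sum>m\<le>N. hermite_abs_coeffs m * 2 ^ m)"
  define Ku where "Ku = (\<Sum>m\<le>N. hermite_abs_coeffs m) / (p - 1)"
  define I0 where "I0 = max 1 ((4 * Kx + 1) powr (1 / \<delta>))"
  define C where "C = (real n + 2) * (8 * (2 powr p + 1 + p)) * Kx\<^sup>2 * (4 / \<rho>) ^ n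
    + (2 + p) * (1 + Ku) ^ nat \<lceil>p\<rceil> * (4 / \<rho>) ^ (n + 2)"
  have \<rho>: "0 < \<rho>" "\<rho> \<le> 1" using p b0 by (auto simp: \<rho>_def)
  have Kx: "0 \<le> Kx" and Ku: "0 \<le> Ku"
    using p by (simp_all add: Kx_def Ku_def sum_nonneg hermite_abs_coeffs_nonneg)
  show ?thesis
  proof (rule exI[of _ C], rule exI[of _ I0], intro conjI allI impI)
    show "1 \<le> I0" by (simp add: I0_def)
    fix I b a
    assume I: "I0 \<le> I" and b: "0 \<le> b" "b \<le> 2 * b0" and a: "\<forall>m\<le>N. \<bar>a m\<bar> \<le> I powr - \<delta>"
    have I1: "1 \<le> I" using I by (simp add: I0_def)
    have "I powr - \<delta> \<le> 1" using I1 \<delta> powr_mono[of "- \<delta>" 0 I] by simp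
    then have a1: "\<bar>a m\<bar> \<le> 1" if "m \<le> N" for m
      using order_trans[OF a[rule_format, OF that]] by simp
    have "b * \<rho> \<le> 2 * b0 * ((p - 1) / (4 * b0))"
      using b \<rho> by (intro mult_mono) (auto simp: \<rho>_def)
    then have b\<rho>: "b * \<rho> \<le> (p - 1) / 2" using b0 by simp
    have R: "0 < \<rho> * I" using \<rho> I1 by simp
    have holX: "(\<lambda>w. eb_complex p k b I w * scaled_hermite_sum_complex N a I w) holomorphic_on ball 0 (\<rho> * I)"
      using eb_times_hermite_sum_complex(1)[OF p k b(1) b\<rho> \<rho> I1 a] .
    have X_le: "norm (eb_complex p k b I w * scaled_hermite_sum_complex N a I w) \<le> Kx * I powr - \<delta>"
      if "norm w \<le> \<rho> * I" for w
      using eb_times_hermite_sum_complex(2)[OF p k b(1) b\<rho> \<rho> I1 a that] by (simp add: Kx_def mult_ac)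
    have small: "Kx * I powr - \<delta> \<le> 1 / 4"
      using powr_neg_le_quarter[OF Kx \<delta>(1)] I by (simp add: I0_def)
    have X_real: "eb_complex p k b I (of_real z) * scaled_hermite_sum_complex N a I (of_real z)
        = of_real (eb p k b (z / I) * scaled_hermite_sum N a I z)" for z
      by (simp add: eb_complex_of_real scaled_hermite_sum_complex_of_real)
    from nonlin_comp_Taylor[OF p R holX X_le small X_real, of n]
    obtain d where d: "\<forall>z. \<bar>nonlin p (eb p k b (z / I) * scaled_hermite_sum N a I z) - (\<Sum>j<n. d j * z ^ j)\<bar>
        \<le> (real n + 2) * (8 * (2 powr p + 1 + p)) * (Kx * I powr - \<delta>)\<^sup>2 * (4 * \<bar>z\<bar> / (\<rho> * I)) ^ n
          + (2 + p) * (1 + \<bar>eb p k b (z / I) * scaled_hermite_sum N a I z\<bar>) ^ nat \<lceil>p\<rceil> * (4 * \<bar>z\<bar> / (\<rho> * I)) ^ (n + 2)"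
      ..
    have x: "\<bar>eb p k b (z / I) * scaled_hermite_sum N a I z\<bar> \<le> Ku * (1 + \<bar>z\<bar>) ^ N" for z
      unfolding Ku_def by (rule abs_eb_times_hermite_sum_le[OF p b(1) I1 a1])
    show "\<exists>d. \<forall>z. \<bar>nonlin p (eb p k b (z / I) * scaled_hermite_sum N a I z) - (\<Sum>j<n. d j * z ^ j)\<bar>
        \<le> C * I powr (- real n - 2 * \<delta>) * (1 + \<bar>z\<bar>) ^ (N * nat \<lceil>p\<rceil> + n + 2)"
      unfolding C_def
      by (rule exI[of _ d], rule allI, rule order_trans[OF d[rule_format] Taylor_terms_le[where
            A="(real n + 2) * (8 * (2 powr p + 1 + p))" and B="2 + p" and L=Kx and n=n and P="nat \<lceil>p\<rceil>",
            OF \<rho>(1) I1 \<delta> _ _ Ku x]])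
        (use p in auto)
  qed
qed

lemma remainder_weight_le:
  fixes I \<delta> Mr z :: real and n N :: nat
  assumes I: "1 \<le> I" and \<delta>: "0 < \<delta>" and nM: "real n + \<delta> \<le> Mr" and Mr: "0 < Mr" "Mr \<le> real N + 1"
  shows "I powr - \<delta> * (I powr - Mr + \<bar>z / I\<bar> powr Mr) \<le> 2 * I powr (- real n - 2 * \<delta>) * (1 + \<bar>z\<bar>) ^ (N + 1)"
proof -
  define W where "W = 1 + \<bar>z\<bar>"
  have W: "1 \<le> W" by (simp add: W_def)
  have "\<bar>z\<bar> powr Mr \<le> W powr Mr"
    using Mr by (intro powr_mono2) (auto simp: W_def)
  also have "\<dots> \<le> W ^ (N + 1)"
    using W Mr by (intro powr_le_power) auto
  finally have zW: "\<bar>z\<bar> powr Mr \<le> W ^ (N + 1)" .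
  have "\<bar>z / I\<bar> powr Mr = \<bar>z\<bar> powr Mr / I powr Mr"
    using I by (simp add: abs_divide powr_divide)
  then have "I powr - Mr + \<bar>z / I\<bar> powr Mr = I powr - Mr * (1 + \<bar>z\<bar> powr Mr)"
    by (simp add: powr_minus divide_inverse algebra_simps)
  also have "\<dots> \<le> I powr - Mr * (2 * W ^ (N + 1))"
    using zW one_le_power[OF W, of "N + 1"] by (intro mult_left_mono) auto
  finally have "I powr - \<delta> * (I powr - Mr + \<bar>z / I\<bar> powr Mr) \<le> I powr - \<delta> * (I powr - Mr * (2 * W ^ (N + 1)))"
    by (intro mult_left_mono) auto
  also have "\<dots> = 2 * I powr (- \<delta> + - Mr) * W ^ (N + 1)"
    by (simp only: powr_add mult_ac)
  also have "\<dots> \<le> 2 * I powr (- real n - 2 * \<delta>) * W ^ (N + 1)"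
    using I nM W by (intro mult_right_mono mult_left_mono powr_mono) auto
  finally show ?thesis by (simp add: W_def)
qed

lemma nonlin_remainder_perturbation:
  fixes p \<delta> Mr :: real and k N n :: nat
  assumes p: "p > 1" and \<delta>: "0 < \<delta>" and nM: "real n + \<delta> \<le> Mr" and Mr: "0 < Mr" "Mr \<le> real N + 1"
  shows "\<exists>C. \<forall>I b a r z. 1 \<le> I \<longrightarrow> 0 \<le> b \<longrightarrow> (\<forall>m\<le>N. \<bar>a m\<bar> \<le> I powr - \<delta>) \<longrightarrow>
    (\<forall>y. \<bar>r y\<bar> \<le> I powr - \<delta> * (I powr - Mr + \<bar>y / I\<bar> powr Mr)) \<longrightarrow>
    \<bar>nonlin p (eb p k b (z / I) * (scaled_hermite_sum N a I z + r z))
      - nonlin p (eb p k b (z / I) * scaled_hermite_sum N a I z)\<bar>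
    \<le> C * I powr (- real n - 2 * \<delta>) * (1 + \<bar>z\<bar>) ^ ((N + 1) * (nat \<lceil>p\<rceil> + 1))"
proof -
  define P where "P = nat \<lceil>p\<rceil>"
  define Ku where "Ku = (\<Sum>m\<le>N. hermite_abs_coeffs m) / (p - 1)"
  define K where "K = 1 + Ku + 2 / (p - 1)"
  have Ku: "0 \<le> Ku"
    using p by (simp add: Ku_def sum_nonneg hermite_abs_coeffs_nonneg)
  show ?thesis
  proof (rule exI[of _ "p * (2 ^ P + 1) * (2 / (p - 1)) * K ^ P"], intro allI impI)
    fix I b z :: real and a :: "nat \<Rightarrow> real" and r :: "real \<Rightarrow> real"
    assume I: "1 \<le> I" and b: "0 \<le> b" and a: "\<forall>m\<le>N. \<bar>a m\<bar> \<le> I powr - \<delta>"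
      and r: "\<forall>y. \<bar>r y\<bar> \<le> I powr - \<delta> * (I powr - Mr + \<bar>y / I\<bar> powr Mr)"
    define W where "W = 1 + \<bar>z\<bar>"
    define J where "J = I powr (- real n - 2 * \<delta>)"
    define x where "x = eb p k b (z / I) * scaled_hermite_sum N a I z"
    define e where "e = eb p k b (z / I) * r z"
    have W: "1 \<le> W" by (simp add: W_def)
    have J: "0 \<le> J" "J \<le> 1"
      using I \<delta> powr_mono[of "- real n - 2 * \<delta>" 0 I] by (auto simp: J_def)
    have eb: "\<bar>eb p k b (z / I)\<bar> \<le> 1 / (p - 1)"
      by (rule abs_eb_le[OF p b])
    have e_le: "\<bar>e\<bar> \<le> 2 / (p - 1) * J * W ^ (N + 1)"
    proof -
      have "\<bar>r z\<bar> \<le> 2 * J * W ^ (N + 1)"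
        using order_trans[OF r[rule_format, of z] remainder_weight_le[OF I \<delta> nM Mr, of z]]
        by (simp add: J_def W_def)
      then have "\<bar>e\<bar> \<le> 1 / (p - 1) * (2 * J * W ^ (N + 1))"
        unfolding e_def abs_mult using eb p by (intro mult_mono) auto
      then show ?thesis by simp
    qed
    have "I powr - \<delta> \<le> 1" using I \<delta> powr_mono[of "- \<delta>" 0 I] by simp
    then have "\<bar>a m\<bar> \<le> 1" if "m \<le> N" for m
      using order_trans[OF a[rule_format, OF that]] by simp
    then have x_le: "\<bar>x\<bar> \<le> Ku * W ^ N"
      unfolding x_def Ku_def W_def by (rule abs_eb_times_hermite_sum_le[OF p b I])
    have "1 + \<bar>x\<bar> + \<bar>e\<bar> \<le> W ^ (N + 1) + Ku * W ^ (N + 1) + 2 / (p - 1) * W ^ (N + 1)"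
    proof -
      have "W ^ N \<le> W ^ (N + 1)"
        using W by (intro power_increasing) auto
      moreover have "1 \<le> W ^ (N + 1)"
        using W by (rule one_le_power)
      moreover have "2 / (p - 1) * J * W ^ (N + 1) \<le> 2 / (p - 1) * W ^ (N + 1)"
        using J W p by (intro mult_right_mono mult_left_le) auto
      ultimately show ?thesis
        using x_le e_le Ku mult_left_mono[of "W ^ N" "W ^ (N + 1)" Ku] by linarith
    qed
    then have xe: "1 + \<bar>x\<bar> + \<bar>e\<bar> \<le> K * W ^ (N + 1)"
      by (simp add: K_def algebra_simps)
    have "\<bar>nonlin p (x + e) - nonlin p x\<bar> \<le> p * (2 ^ P + 1) * \<bar>e\<bar> * (1 + \<bar>x\<bar> + \<bar>e\<bar>) ^ P"
      unfolding P_def by (rule nonlin_lipschitz[OF p])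
    also have "\<dots> \<le> p * (2 ^ P + 1) * (2 / (p - 1) * J * W ^ (N + 1)) * (K * W ^ (N + 1)) ^ P"
      using p e_le xe J W by (intro mult_mono mult_left_mono power_mono) auto
    also have "\<dots> = p * (2 ^ P + 1) * (2 / (p - 1)) * K ^ P * J * W ^ ((N + 1) * (P + 1))"
      by (simp add: power_mult_distrib power_add power_mult mult_ac)
    finally show "\<bar>nonlin p (eb p k b (z / I) * (scaled_hermite_sum N a I z + r z))
      - nonlin p (eb p k b (z / I) * scaled_hermite_sum N a I z)\<bar>
    \<le> p * (2 ^ P + 1) * (2 / (p - 1)) * K ^ P * I powr (- real n - 2 * \<delta>) * (1 + \<bar>z\<bar>) ^ ((N + 1) * (nat \<lceil>p\<rceil> + 1))"
      by (simp add: x_def e_def J_def W_def P_def distrib_left)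
  qed
qed

lemma integral_hermite_add_low_degree:
  fixes f :: "real \<Rightarrow> real"
  assumes f: "f \<in> borel_measurable borel" and bound: "\<And>z. \<bar>f z\<bar> \<le> K * (1 + \<bar>z\<bar>) ^ D"
  shows "(\<integral>z. (f z + (\<Sum>j<n. d j * z ^ j)) * hermite n z * gauss z \<partial>lborel)
    = (\<integral>z. f z * hermite n z * gauss z \<partial>lborel)"
proof -
  define P where "P z = (\<Sum>j<n. d j * z ^ j)" for z
  have P_le: "\<bar>P z\<bar> \<le> (\<Sum>j<n. \<bar>d j\<bar>) * (1 + \<bar>z\<bar>) ^ n" for z
  proof -
    have "\<bar>d j * z ^ j\<bar> \<le> \<bar>d j\<bar> * (1 + \<bar>z\<bar>) ^ n" if "j < n" for j
      using that by (auto simp: abs_mult power_abs intro!: mult_left_mono order_trans[OF power_mono power_increasing])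
    then have "\<bar>P z\<bar> \<le> (\<Sum>j<n. \<bar>d j\<bar> * (1 + \<bar>z\<bar>) ^ n)"
      unfolding P_def by (intro order_trans[OF sum_abs] sum_mono) auto
    then show ?thesis by (simp add: sum_distrib_right)
  qed
  have "P \<in> borel_measurable borel" unfolding P_def by measurable
  then have "integrable lborel (\<lambda>z. P z * hermite n z * gauss z)"
    using P_le by (rule hermite_integral_polynomially_bounded(1))
  moreover have "integrable lborel (\<lambda>z. f z * hermite n z * gauss z)"
    using f bound by (rule hermite_integral_polynomially_bounded(1))
  moreover have "(\<integral>z. P z * hermite n z * gauss z \<partial>lborel) = 0"
    unfolding P_def by (rule hermite_orthogonal) simp
  ultimately show ?thesis
    by (simp add: P_def[symmetric] distrib_right)
qed

lemma hermite_integral_nonlin_le: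
  fixes p b0 \<delta> Mr :: real and k N n :: nat
  assumes p: "p > 1" and k: "k \<ge> 1" and b0: "b0 > 0" and \<delta>: "0 < \<delta>" "\<delta> \<le> 1"
    and nM: "real n + \<delta> \<le> Mr" and Mr: "0 < Mr" "Mr \<le> real N + 1"
  shows "\<exists>C I0. 1 \<le> I0 \<and> (\<forall>I b a r. I0 \<le> I \<longrightarrow> 0 \<le> b \<longrightarrow> b \<le> 2 * b0 \<longrightarrow>
      (\<forall>m\<le>N. \<bar>a m\<bar> \<le> I powr - \<delta>) \<longrightarrow>
      (\<forall>y. \<bar>r y\<bar> \<le> I powr - \<delta> * (I powr - Mr + \<bar>y / I\<bar> powr Mr)) \<longrightarrow>
      r \<in> borel_measurable borel \<longrightarrow>
      \<bar>\<integral>z. nonlin p (eb p k b (z / I) * (scaled_hermite_sum N a I z + r z)) * hermite n z * gauss z \<partial>lborel\<bar>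
        \<le> C * I powr (- real n - 2 * \<delta>))"
proof -
  define P where "P = nat \<lceil>p\<rceil>"
  define D where "D = (N + 1) * (P + 1) + n + 2"
  obtain C1 I0 where I0: "1 \<le> I0" and expansion: "\<forall>I b a. I0 \<le> I \<longrightarrow> 0 \<le> b \<longrightarrow> b \<le> 2 * b0 \<longrightarrow>
      (\<forall>m\<le>N. \<bar>a m\<bar> \<le> I powr - \<delta>) \<longrightarrow>
      (\<exists>d. \<forall>z. \<bar>nonlin p (eb p k b (z / I) * scaled_hermite_sum N a I z) - (\<Sum>j<n. d j * z ^ j)\<bar>
        \<le> C1 * I powr (- real n - 2 * \<delta>) * (1 + \<bar>z\<bar>) ^ (N * P + n + 2))"
    using nonlin_hermite_sum_expansion[OF p k b0 \<delta>, of N n] unfolding P_def by blast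
  obtain C2 where perturbation: "\<forall>I b a r z. 1 \<le> I \<longrightarrow> 0 \<le> b \<longrightarrow> (\<forall>m\<le>N. \<bar>a m\<bar> \<le> I powr - \<delta>) \<longrightarrow>
      (\<forall>y. \<bar>r y\<bar> \<le> I powr - \<delta> * (I powr - Mr + \<bar>y / I\<bar> powr Mr)) \<longrightarrow>
      \<bar>nonlin p (eb p k b (z / I) * (scaled_hermite_sum N a I z + r z))
        - nonlin p (eb p k b (z / I) * scaled_hermite_sum N a I z)\<bar>
      \<le> C2 * I powr (- real n - 2 * \<delta>) * (1 + \<bar>z\<bar>) ^ ((N + 1) * (P + 1))"
    using nonlin_remainder_perturbation[OF p \<delta>(1) nM Mr, where k=k] unfolding P_def by blast
  show ?thesis
  proof (rule exI[of _ "(\<bar>C1\<bar> + \<bar>C2\<bar>) * hermite_abs_coeffs n * gauss_weight_integral (D + n)"],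
         rule exI[of _ I0], intro conjI allI impI)
    show "1 \<le> I0" by (rule I0)
    fix I b :: real and a :: "nat \<Rightarrow> real" and r :: "real \<Rightarrow> real"
    assume I: "I0 \<le> I" and b: "0 \<le> b" "b \<le> 2 * b0" and a: "\<forall>m\<le>N. \<bar>a m\<bar> \<le> I powr - \<delta>"
      and r: "\<forall>y. \<bar>r y\<bar> \<le> I powr - \<delta> * (I powr - Mr + \<bar>y / I\<bar> powr Mr)"
      and r_meas [measurable]: "r \<in> borel_measurable borel"
    define J where "J = I powr (- real n - 2 * \<delta>)"
    define u where "u z = nonlin p (eb p k b (z / I) * (scaled_hermite_sum N a I z + r z))" for z
    obtain d where d: "\<forall>z. \<bar>nonlin p (eb p k b (z / I) * scaled_hermite_sum N a I z) - (\<Sum>j<n. d j * z ^ j)\<bar>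
        \<le> C1 * J * (1 + \<bar>z\<bar>) ^ (N * P + n + 2)"
      using expansion I b a unfolding J_def by blast
    define f where "f z = u z - (\<Sum>j<n. d j * z ^ j)" for z
    have f_le: "\<bar>f z\<bar> \<le> (\<bar>C1\<bar> + \<bar>C2\<bar>) * J * (1 + \<bar>z\<bar>) ^ D" for z
    proof -
      have W: "(1 + \<bar>z\<bar>) ^ e \<le> (1 + \<bar>z\<bar>) ^ D" if "e \<le> D" for e
        using that by (intro power_increasing) auto
      have J: "0 \<le> J" by (simp add: J_def)
      have I1: "1 \<le> I" using I I0 by linarith
      have "\<bar>u z - nonlin p (eb p k b (z / I) * scaled_hermite_sum N a I z)\<bar>
          \<le> C2 * J * (1 + \<bar>z\<bar>) ^ ((N + 1) * (P + 1))"
        unfolding u_def J_def by (rule perturbation[rule_format, OF I1 b(1)]) (use a r in auto)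
      then have "\<bar>f z\<bar> \<le> C2 * J * (1 + \<bar>z\<bar>) ^ ((N + 1) * (P + 1)) + C1 * J * (1 + \<bar>z\<bar>) ^ (N * P + n + 2)"
        using d[rule_format, of z] unfolding f_def by linarith
      also have "\<dots> \<le> \<bar>C2\<bar> * J * (1 + \<bar>z\<bar>) ^ D + \<bar>C1\<bar> * J * (1 + \<bar>z\<bar>) ^ D"
        using J W[of "(N + 1) * (P + 1)"] W[of "N * P + n + 2"] abs_ge_self[of C1] abs_ge_self[of C2]
        by (intro add_mono mult_mono) (auto simp: D_def)
      finally show ?thesis by (simp add: algebra_simps)
    qed
    have f_meas: "f \<in> borel_measurable borel"
      unfolding f_def u_def nonlin_def eb_def scaled_hermite_sum_def by measurable
    have "(\<integral>z. u z * hermite n z * gauss z \<partial>lborel) = (\<integral>z. (f z + (\<Sum>j<n. d j * z ^ j)) * hermite n z * gauss z \<partial>lborel)"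
      by (simp add: f_def)
    also have "\<dots> = (\<integral>z. f z * hermite n z * gauss z \<partial>lborel)"
      by (rule integral_hermite_add_low_degree[OF f_meas f_le])
    finally have "\<bar>\<integral>z. u z * hermite n z * gauss z \<partial>lborel\<bar>
        \<le> (\<bar>C1\<bar> + \<bar>C2\<bar>) * J * hermite_abs_coeffs n * gauss_weight_integral (D + n)"
      using hermite_integral_polynomially_bounded(2)[OF f_meas f_le] by simp
    then show "\<bar>\<integral>z. u z * hermite n z * gauss z \<partial>lborel\<bar>
        \<le> (\<bar>C1\<bar> + \<bar>C2\<bar>) * hermite_abs_coeffs n * gauss_weight_integral (D + n) * I powr (- real n - 2 * \<delta>)"
      by (simp add: J_def mult_ac)
  qed
qed

lemma Mfl_bounds:
  assumes "p > 1" "k \<ge> 1"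
  shows "0 < Mexp p k" "real (Mfl p k) < Mexp p k" "Mexp p k \<le> real (Mfl p k) + 1"
proof -
  show M: "0 < Mexp p k" using assms by (simp add: Mexp_def)
  have "Mexp p k \<le> of_int \<lceil>Mexp p k\<rceil>" "of_int \<lceil>Mexp p k\<rceil> < Mexp p k + 1"
    by linarith+
  moreover have "real (Mfl p k) = of_int \<lceil>Mexp p k\<rceil> - 1"
    using M by (simp add: Mfl_def)
  ultimately show "real (Mfl p k) < Mexp p k" "Mexp p k \<le> real (Mfl p k) + 1"
    by linarith+
qed

lemma borel_measurable_of_weighted:
  assumes "(\<lambda>y. q y / (1 + \<bar>y\<bar> powr M)) \<in> borel_measurable lborel"
  shows "(q :: real \<Rightarrow> real) \<in> borel_measurable borel"
proof -
  have [measurable]: "(\<lambda>y. q y / (1 + \<bar>y\<bar> powr M)) \<in> borel_measurable borel"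
    using assms by simp
  have "(\<lambda>y. q y / (1 + \<bar>y\<bar> powr M) * (1 + \<bar>y\<bar> powr M)) \<in> borel_measurable borel"
    by measurable
  moreover have "(\<lambda>y. q y / (1 + \<bar>y\<bar> powr M) * (1 + \<bar>y\<bar> powr M)) = q"
  proof
    fix y
    have "0 < 1 + \<bar>y\<bar> powr M" by (simp add: add_pos_nonneg)
    then show "q y / (1 + \<bar>y\<bar> powr M) * (1 + \<bar>y\<bar> powr M) = q y" by simp
  qed
  ultimately show ?thesis by simp
qed

lemma Ifun_ge:
  assumes k: "k \<ge> 2" and s: "s \<ge> 1" "s \<ge> 4 * ln L" and L: "L > 0"
  shows "L \<le> Ifun k s"
proof -
  have "s / real k \<le> s / 2"
    using k s by (intro divide_left_mono) auto
  moreover have "s / 2 * (1 - 1 / real k) = s / 2 - s / real k / 2"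
    by (simp add: algebra_simps)
  ultimately have "ln L \<le> s / 2 * (1 - 1 / real k)"
    using s by linarith
  then show ?thesis
    using L unfolding Ifun_def by (metis exp_ln exp_le_cancel_iff)
qed

lemma Proj_Nq_eq:
  fixes k :: nat and s :: real
  defines "I \<equiv> Ifun k s"
  shows "Proj k s n (Nq p k b q) = I ^ n / (2 ^ n * fact n) *
    (\<integral>z. nonlin p (eb p k b (z / I) * (scaled_hermite_sum (Mfl p k) (\<lambda>m. Proj k s m q) I z
        + qminus p k s q (z / I))) * hermite n z * gauss z \<partial>lborel)"
proof -
  have "q (z / I) = scaled_hermite_sum (Mfl p k) (\<lambda>m. Proj k s m q) I z + qminus p k s q (z / I)" for z
    by (simp add: scaled_hermite_sum_def qminus_def Hpol_scaled I_def mult_ac atLeast0AtMost)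
  then have "Nq p k b q (z / I)
      = nonlin p (eb p k b (z / I) * (scaled_hermite_sum (Mfl p k) (\<lambda>m. Proj k s m q) I z + qminus p k s q (z / I)))"
    for z by (simp add: Nq_def nonlin_def mult.assoc)
  then show ?thesis
    by (simp add: Proj_eq_scaled_hermite_integral I_def)
qed

lemma abs_Proj_Nq_le:
  fixes k :: nat and s :: real
  defines "I \<equiv> Ifun k s"
  assumes "\<bar>\<integral>z. nonlin p (eb p k b (z / I) * (scaled_hermite_sum (Mfl p k) (\<lambda>m. Proj k s m q) I z
        + qminus p k s q (z / I))) * hermite n z * gauss z \<partial>lborel\<bar> \<le> C * I powr (- real n - 2 * \<delta>)"
  shows "\<bar>Proj k s n (Nq p k b q)\<bar> \<le> \<bar>C\<bar> * I powr (- 2 * \<delta>)"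
proof -
  have I: "0 < I" by (simp add: I_def Ifun_pos)
  have "1 * 1 \<le> (2 ^ n * fact n :: real)"
    by (intro mult_mono) auto
  then have "I ^ n / (2 ^ n * fact n) \<le> I ^ n / 1"
    using I by (intro divide_left_mono) auto
  then have "\<bar>Proj k s n (Nq p k b q)\<bar> \<le> I ^ n * (C * I powr (- real n - 2 * \<delta>))"
    unfolding Proj_Nq_eq I_def[symmetric] abs_mult using assms(2) I
    by (intro mult_mono) auto
  also have "I ^ n * (C * I powr (- real n - 2 * \<delta>)) = C * I powr (- 2 * \<delta>)"
    using I by (simp add: powr_realpow[symmetric] mult.left_commute flip: powr_add)
  also have "\<dots> \<le> \<bar>C\<bar> * I powr (- 2 * \<delta>)"
    by (intro mult_right_mono) auto
  finally show ?thesis .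
qed

lemma inV_bounds:
  fixes k :: nat and s :: real
  defines "I \<equiv> Ifun k s"
  assumes V: "inV p k \<delta> b0 s q b" and \<delta>: "0 < \<delta>" and I: "1 \<le> I"
  shows "\<forall>m\<le>Mfl p k. \<bar>Proj k s m q\<bar> \<le> I powr - \<delta>"
    and "\<forall>y. \<bar>qminus p k s q (y / I)\<bar> \<le> I powr - \<delta> * (I powr - Mexp p k + \<bar>y / I\<bar> powr Mexp p k)"
    and "q \<in> borel_measurable borel"
    and "b0 / 2 \<le> b" "b \<le> 2 * b0"
proof -
  show "\<forall>m\<le>Mfl p k. \<bar>Proj k s m q\<bar> \<le> I powr - \<delta>"
  proof (intro allI impI)
    fix m assume m: "m \<le> Mfl p k"
    show "\<bar>Proj k s m q\<bar> \<le> I powr - \<delta>"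
    proof (cases "m = 2 * k")
      case True
      have "\<bar>Proj k s m q\<bar> \<le> I powr (- 2 * \<delta>)" using V True by (simp add: inV_def I_def)
      also have "\<dots> \<le> I powr - \<delta>" using I \<delta> by (intro powr_mono) auto
      finally show ?thesis .
    qed (use V m in \<open>simp add: inV_def I_def\<close>)
  qed
  show "\<forall>y. \<bar>qminus p k s q (y / I)\<bar> \<le> I powr - \<delta> * (I powr - Mexp p k + \<bar>y / I\<bar> powr Mexp p k)"
  proof
    fix y
    have "0 < I powr - Mexp p k + \<bar>y / I\<bar> powr Mexp p k"
      using I by (simp add: add_pos_nonneg)
    moreover have "\<bar>qminus p k s q (y / I)\<bar> / (I powr - Mexp p k + \<bar>y / I\<bar> powr Mexp p k) \<le> I powr - \<delta>"
      using V unfolding inV_def I_def by blast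
    ultimately show "\<bar>qminus p k s q (y / I)\<bar> \<le> I powr - \<delta> * (I powr - Mexp p k + \<bar>y / I\<bar> powr Mexp p k)"
      by (simp add: divide_le_eq mult.commute)
  qed
  show "q \<in> borel_measurable borel"
    using V by (intro borel_measurable_of_weighted[where M="Mexp p k"]) (simp add: inV_def)
  show "b0 / 2 \<le> b" "b \<le> 2 * b0"
    using V by (simp_all add: inV_def)
qed

lemma finite_uniform_constants:
  fixes P :: "nat \<Rightarrow> real \<Rightarrow> real \<Rightarrow> bool"
  assumes ex: "\<And>n. n \<le> N \<Longrightarrow> \<exists>C I0. P n C I0"
    and mono: "\<And>n C C' I0 I0'. P n C I0 \<Longrightarrow> C \<le> C' \<Longrightarrow> I0 \<le> I0' \<Longrightarrow> P n C' I0'"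
  shows "\<exists>C I0. \<forall>n\<le>N. P n C I0"
proof -
  have "\<exists>CI. n \<le> N \<longrightarrow> P n (fst CI) (snd CI)" for n
    using ex by (cases "n \<le> N") auto
  then obtain f where f: "\<And>n. n \<le> N \<Longrightarrow> P n (fst (f n)) (snd (f n))"
    by metis
  show ?thesis
  proof (rule exI[of _ "Max ((\<lambda>n. fst (f n)) ` {..N})"], rule exI[of _ "Max ((\<lambda>n. snd (f n)) ` {..N})"],
      intro allI impI)
    fix n assume n: "n \<le> N"
    show "P n (Max ((\<lambda>n. fst (f n)) ` {..N})) (Max ((\<lambda>n. snd (f n)) ` {..N}))"
      by (rule mono[OF f[OF n]]) (use n in \<open>simp_all add: Max_ge\<close>)
  qed
qed

lemma Proj_Nq_uniform_bound:
  fixes p b0 \<delta> :: real and k :: nat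
  assumes p: "p > 1" and k: "k \<ge> 2" and b0: "b0 > 0"
    and \<delta>: "0 < \<delta>" "\<delta> < min 1 (Mexp p k - real (Mfl p k))"
  shows "\<exists>C L. 0 < L \<and> (\<forall>s q b n. L \<le> Ifun k s \<longrightarrow> inV p k \<delta> b0 s q b \<longrightarrow> n \<le> Mfl p k \<longrightarrow>
    \<bar>Proj k s n (Nq p k b q)\<bar> \<le> C * Ifun k s powr (- 2 * \<delta>))"
proof -
  define N where "N = Mfl p k"
  define M where "M = Mexp p k"
  have k1: "k \<ge> 1" using k by simp
  have M: "0 < M" "M \<le> real N + 1" and NM: "real N + \<delta> < M"
    using Mfl_bounds[OF p k1] \<delta> by (simp_all add: M_def N_def)
  define good where "good n C I0 \<longleftrightarrow> 1 \<le> I0 \<and> (\<forall>I b a r. I0 \<le> I \<longrightarrow> 0 \<le> b \<longrightarrow> b \<le> 2 * b0 \<longrightarrow>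
      (\<forall>m\<le>N. \<bar>a m\<bar> \<le> I powr - \<delta>) \<longrightarrow>
      (\<forall>y. \<bar>r y\<bar> \<le> I powr - \<delta> * (I powr - M + \<bar>y / I\<bar> powr M)) \<longrightarrow>
      r \<in> borel_measurable borel \<longrightarrow>
      \<bar>\<integral>z. nonlin p (eb p k b (z / I) * (scaled_hermite_sum N a I z + r z)) * hermite n z * gauss z \<partial>lborel\<bar>
        \<le> C * I powr (- real n - 2 * \<delta>))" for n C I0
  have "\<exists>C I0. \<forall>n\<le>N. good n C I0"
  proof (rule finite_uniform_constants)
    show "\<exists>C I0. good n C I0" if "n \<le> N" for n
      using hermite_integral_nonlin_le[OF p k1 b0 \<delta>(1) _ _ M, of n] \<delta> that NM unfolding good_def by auto
    show "good n C' I0'" if g: "good n C I0" and C: "C \<le> C'" and I0: "I0 \<le> I0'" for n C C' I0 I0'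
    proof -
      have "C * I powr x \<le> C' * I powr x" for I x :: real
        using C by (intro mult_right_mono) auto
      then show ?thesis
        using g I0 unfolding good_def by (blast intro: order_trans)
    qed
  qed
  then obtain C I0 where good: "\<And>n. n \<le> N \<Longrightarrow> good n C I0" by blast
  show ?thesis
  proof (rule exI[of _ "\<bar>C\<bar>"], rule exI[of _ I0], intro conjI allI impI)
    show "0 < I0" using good[of 0] by (simp add: good_def)
    fix s q b n
    assume IL: "I0 \<le> Ifun k s" and V: "inV p k \<delta> b0 s q b" and n: "n \<le> Mfl p k"
    define I where "I = Ifun k s"
    have nN: "n \<le> N" using n by (simp add: N_def)
    have I1: "1 \<le> I" using good[OF nN] IL by (simp add: good_def I_def)
    note V_bounds = inV_bounds[OF V \<delta>(1) I1[unfolded I_def]]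
    have [measurable]: "q \<in> borel_measurable borel" by (rule V_bounds(3))
    have "\<bar>\<integral>z. nonlin p (eb p k b (z / I) * (scaled_hermite_sum N (\<lambda>m. Proj k s m q) I z
        + qminus p k s q (z / I))) * hermite n z * gauss z \<partial>lborel\<bar> \<le> C * I powr (- real n - 2 * \<delta>)"
      using good[OF nN] IL V_bounds(1,2,4,5) b0 unfolding good_def
      by (auto simp: I_def N_def M_def qminus_def Hpol_def)
    then show "\<bar>Proj k s n (Nq p k b q)\<bar> \<le> \<bar>C\<bar> * Ifun k s powr (- 2 * \<delta>)"
      unfolding I_def N_def by (rule abs_Proj_Nq_le)
  qed
qed

lemma projection_bound_on_shrinking_set:
  fixes p b0 \<delta> :: real and k :: nat
  assumes "p > 1" and "k \<ge> 2" and "b0 > 0"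
    and "0 < \<delta>" "\<delta> < min 1 (Mexp p k - real (Mfl p k))"
  shows "\<exists>C. \<exists>s5 \<ge> 1. \<forall>s0 \<ge> s5. \<forall>sbar > s0.
    \<forall>(q :: real \<Rightarrow> real \<Rightarrow> real) (b :: real \<Rightarrow> real).
      (\<forall>s \<in> {s0..sbar}. inV p k \<delta> b0 s (q s) (b s)) \<longrightarrow>
      (\<forall>s \<in> {s0..sbar}. \<forall>n \<le> Mfl p k. \<bar>Proj k s n (Nq p k (b s) (q s))\<bar> \<le> C * Ifun k s powr (- 2 * \<delta>))"
proof -
  obtain C L where L: "0 < L" and bound: "\<forall>s q b n. L \<le> Ifun k s \<longrightarrow> inV p k \<delta> b0 s q b \<longrightarrow>
      n \<le> Mfl p k \<longrightarrow> \<bar>Proj k s n (Nq p k b q)\<bar> \<le> C * Ifun k s powr (- 2 * \<delta>)"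
    using Proj_Nq_uniform_bound[OF assms] by blast
  show ?thesis
  proof (rule exI[of _ C], rule exI[of _ "max 1 (4 * ln L)"], intro conjI allI impI ballI)
    fix s0 sbar :: real and q :: "real \<Rightarrow> real \<Rightarrow> real" and b :: "real \<Rightarrow> real" and s :: real and n :: nat
    assume s0: "max 1 (4 * ln L) \<le> s0" and "s0 < sbar"
      and V: "\<forall>s \<in> {s0..sbar}. inV p k \<delta> b0 s (q s) (b s)" and s: "s \<in> {s0..sbar}" and n: "n \<le> Mfl p k"
    have "L \<le> Ifun k s"
      using s0 s L by (intro Ifun_ge[OF assms(2)]) auto
    then show "\<bar>Proj k s n (Nq p k (b s) (q s))\<bar> \<le> C * Ifun k s powr (- 2 * \<delta>)"
      using bound V s n by blast
  qed simp
qed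

theorem mainTheorem8:
  fixes p :: real and k :: nat
  assumes "p > 1" and "k \<ge> 2"
  shows "\<forall>b0 > 0. \<exists>\<delta>5 > 0. \<forall>\<delta>. 0 < \<delta> \<and> \<delta> < \<delta>5 \<longrightarrow>
           (\<exists>C. \<exists>s5 \<ge> 1. \<forall>s0 \<ge> s5. \<forall>sbar > s0.
              \<forall>(q :: real \<Rightarrow> real \<Rightarrow> real) (b :: real \<Rightarrow> real).
                (\<forall>s \<in> {s0..sbar}. inV p k \<delta> b0 s (q s) (b s)) \<longrightarrow>
                (\<forall>s \<in> {s0..sbar}. \<forall>n \<le> Mfl p k.
                   \<bar>Proj k s n (Nq p k (b s) (q s))\<bar> \<le> C * Ifun k s powr (- 2 * \<delta>)))"
proof -
  have "0 < min 1 (Mexp p k - real (Mfl p k))"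
    using Mfl_bounds assms by simp
  then show ?thesis
    using projection_bound_on_shrinking_set[OF assms] by blast
qed

end
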